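(* Fix integers $M\ge N\ge1$ and $c_0,\dots,c_{N-1}>0$, and let $h_{\mathbf{c}}(z)=\sum_{j=0}^{N-1}c_jz^j$. Then for every $A\in\mathbb{P}_N(\mathbb{C})\setminus\{0\}$, $$\mathcal{C}(h_{\mathbf{c}};z^M;A)=\varrho\bigl(h_{\mathbf{c}}[A]^{\dagger/2}A^{\circ M}h_{\mathbf{c}}[A]^{\dagger/2}\bigr).$$ Moreover, if $A=\mathbf{u}\mathbf{u}^*$ with $\mathbf{u}\in\mathbb{C}^N$ having pairwise distinct coordinates, then $$\mathcal{C}(h_{\mathbf{c}};z^M;\mathbf{u}\mathbf{u}^* )=(\mathbf{u}^{\circ M})^*h_{\mathbf{c}}[\mathbf{u}\mathbf{u}^*]^\dagger\mathbf{u}^{\circ M}=\sum_{j=0}^{N-1}\frac{|s_{\mu(M,N,j)}(\mathbf{u})|^2}{c_j}.$$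
   Context: $\mathbb{P}_N(\mathbb{C})$ is the set of $N\times N$ Hermitian positive semidefinite matrices. $h[A]$ is entrywise application, $A^{\circ M}$ the entrywise power, $\mathbf{u}^{\circ M}=(u_i^M)$. $\mathcal{C}(h;g;A)$ is the smallest real $C$ with $g[A]\le C\,h[A]$ in the Loewner order. $C^\dagger$ is the Moore–Penrose inverse, $C^{\dagger/2}$ the principal square root of $C^\dagger$, and $\varrho(C)$ the spectral radius. $s_\lambda$ is the Schur polynomial and $\mu(M,N,j)=(M-N+1,1,\dots,1,0,\dots,0)$ the hook partition with $N-j-1$ ones and $j$ zeros. *)

theory Defs
  imports "Jordan_Normal_Form.Spectral_Radius"
begin

definition adj :: "complex mat \<Rightarrow> complex mat" where
  "adj A = mat (dim_col A) (dim_row A) (\<lambda>(i,j). cnj (A $$ (j,i)))"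

definition psd :: "nat \<Rightarrow> complex mat \<Rightarrow> bool" where
  "psd n A \<longleftrightarrow> A \<in> carrier_mat n n \<and> adj A = A \<and>
     (\<forall>v \<in> carrier_vec n. 0 \<le> Re (conjugate v \<bullet> (A *\<^sub>v v)))"

definition loewner_le :: "nat \<Rightarrow> complex mat \<Rightarrow> complex mat \<Rightarrow> bool" where
  "loewner_le n B C \<longleftrightarrow> B \<in> carrier_mat n n \<and> C \<in> carrier_mat n n \<and> psd n (C - B)"

definition entrywise :: "(complex \<Rightarrow> complex) \<Rightarrow> complex mat \<Rightarrow> complex mat" where
  "entrywise h A = map_mat h A"

definition crit_set :: "nat \<Rightarrow> (complex \<Rightarrow> complex) \<Rightarrow> (complex \<Rightarrow> complex) \<Rightarrow> complex mat \<Rightarrow> real set" where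
  "crit_set n h g A = {C. loewner_le n (entrywise g A) (complex_of_real C \<cdot>\<^sub>m entrywise h A)}"

definition crit_const :: "nat \<Rightarrow> (complex \<Rightarrow> complex) \<Rightarrow> (complex \<Rightarrow> complex) \<Rightarrow> complex mat \<Rightarrow> real" where
  "crit_const n h g A = Inf (crit_set n h g A)"

definition mp_inverse :: "complex mat \<Rightarrow> complex mat" where
  "mp_inverse A = (THE X. X \<in> carrier_mat (dim_col A) (dim_row A) \<and>
      A * X * A = A \<and> X * A * X = X \<and> adj (A * X) = A * X \<and> adj (X * A) = X * A)"

definition psd_sqrt :: "complex mat \<Rightarrow> complex mat" where
  "psd_sqrt A = (THE X. psd (dim_row A) X \<and> X * X = A)"

definition mp_half :: "complex mat \<Rightarrow> complex mat" where
  "mp_half A = psd_sqrt (mp_inverse A)"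

definition hc :: "nat \<Rightarrow> (nat \<Rightarrow> real) \<Rightarrow> complex \<Rightarrow> complex" where
  "hc N c z = (\<Sum>j<N. complex_of_real (c j) * z ^ j)"

definition outer :: "complex vec \<Rightarrow> complex mat" where
  "outer u = mat (dim_vec u) (dim_vec u) (\<lambda>(i,j). u $ i * cnj (u $ j))"

definition vpow :: "complex vec \<Rightarrow> nat \<Rightarrow> complex vec" where
  "vpow u M = map_vec (\<lambda>z. z ^ M) u"

text \<open>Evaluation of the Schur polynomial s_lambda in N variables at x (lambda given as a
  weakly decreasing sequence lam 0 >= ... >= lam (N-1)), via Jacobi's bialternant formula
  s_lambda = a_{lambda+delta} / a_delta. This is the value of the Schur polynomial whenever
  the coordinates of x are pairwise distinct (the only case used).\<close>
definition schur_eval :: "nat \<Rightarrow> (nat \<Rightarrow> nat) \<Rightarrow> (nat \<Rightarrow> complex) \<Rightarrow> complex" where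
  "schur_eval N lam x =
     det (mat N N (\<lambda>(i,j). x i ^ (lam j + (N - 1 - j)))) /
     det (mat N N (\<lambda>(i,j). x i ^ (N - 1 - j)))"

definition hook :: "nat \<Rightarrow> nat \<Rightarrow> nat \<Rightarrow> nat \<Rightarrow> nat" where
  "hook M N j k = (if k = 0 then M - N + 1 else if k \<le> N - j - 1 then 1 else 0)"

end

theory Submission
  imports Defs
begin

text \<open>Write \<open>A = \<Sum>\<^sub>k w\<^sub>k w\<^sub>k\<^sup>*\<close>. Then \<open>h\<^sub>c[A]\<close> and \<open>A\<^sup>\<circ>\<^sup>M\<close> are Gram matrices of the monomials in
  the \<open>w\<^sub>k\<close> of degree \<open>< N\<close> (weighted by \<open>\<surd>c\<^sub>j\<close>) and of degree \<open>M\<close>. On the \<open>N\<close> index points every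
  monomial agrees with a polynomial of degree \<open>\<le> N - 1\<close> (Lagrange interpolation), so
  \<open>ker h\<^sub>c[A] \<subseteq> ker A\<^sup>\<circ>\<^sup>M\<close>. For positive semidefinite \<open>H, P\<close> with \<open>ker H \<subseteq> ker P\<close>, the inequality
  \<open>P \<le> C H\<close> holds iff \<open>C \<ge> \<rho>(H\<^sup>\<dagger>\<^sup>/\<^sup>2 P H\<^sup>\<dagger>\<^sup>/\<^sup>2)\<close>, because every \<open>v\<close> is \<open>H\<^sup>\<dagger>\<^sup>/\<^sup>2 w\<close> plus a kernel vector
  of \<open>H\<close> with \<open>|w|\<^sup>2 = v\<^sup>* H v\<close>.

  For \<open>A = u u\<^sup>*\<close> the matrix \<open>h\<^sub>c[A]\<^sup>\<dagger>\<^sup>/\<^sup>2 A\<^sup>\<circ>\<^sup>M h\<^sub>c[A]\<^sup>\<dagger>\<^sup>/\<^sup>2\<close> has rank one. If the coordinates of \<open>u\<close> are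
  distinct, \<open>h\<^sub>c[u u\<^sup>*] = V D V\<^sup>*\<close> with the invertible Vandermonde matrix \<open>V\<close> and
  \<open>D = diag(c\<^sub>N\<^sub>-\<^sub>1, \<dots>, c\<^sub>0)\<close>, so the constant is \<open>\<Sum>\<^sub>k |(V\<^sup>-\<^sup>1 u\<^sup>\<circ>\<^sup>M)\<^sub>k|\<^sup>2 / c\<^sub>N\<^sub>-\<^sub>1\<^sub>-\<^sub>k\<close>; by Cramer's rule
  these coordinates are quotients of alternants, i.e.\ the hook Schur polynomials.\<close>

lemma index_mult_mat_sum:
  assumes "A \<in> carrier_mat n k" "B \<in> carrier_mat k m" "i < n" "j < m"
  shows "(A * B) $$ (i,j) = (\<Sum>l<k. A $$ (i,l) * B $$ (l,j))"
  using assms by (auto simp: scalar_prod_def atLeast0LessThan intro!: sum.cong)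

lemma index_mult_mat_vec_sum:
  assumes "A \<in> carrier_mat n k" "v \<in> carrier_vec k" "i < n"
  shows "(A *\<^sub>v v) $ i = (\<Sum>l<k. A $$ (i,l) * v $ l)"
  using assms by (auto simp: scalar_prod_def atLeast0LessThan intro!: sum.cong)

lemma cscalar_prod_sum:
  "v \<in> carrier_vec n \<Longrightarrow> w \<in> carrier_vec n \<Longrightarrow> v \<bullet>c w = (\<Sum>k<n. v $ k * cnj (w $ k))"
  by (auto simp: scalar_prod_def atLeast0LessThan intro!: sum.cong)

lemma conjugate_scalar_prod_self:
  fixes z :: "complex vec"
  assumes z: "z \<in> carrier_vec n"
  shows "conjugate z \<bullet> z = complex_of_real (\<Sum>i<n. (cmod (z $ i))^2)"
proof -
  have "conjugate z \<bullet> z = (\<Sum>i<n. cnj (z $ i) * z $ i)"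
    using z by (auto simp: scalar_prod_def atLeast0LessThan intro!: sum.cong)
  also have "\<dots> = complex_of_real (\<Sum>i<n. (cmod (z $ i))^2)"
    by (simp only: of_real_sum complex_norm_square) (simp add: ac_simps)
  finally show ?thesis .
qed

lemma conjugate_scalar_prod_self_eq_0:
  fixes z :: "complex vec"
  assumes z: "z \<in> carrier_vec n" and h: "conjugate z \<bullet> z = 0"
  shows "z = 0\<^sub>v n"
proof -
  have "z \<bullet>c z = 0" using h conjugate_vec_sprod_comm[OF z z] by simp
  thus ?thesis using conjugate_square_eq_0_vec[OF z] by simp
qed

lemma adj_dims[simp]: "dim_row (adj A) = dim_col A" "dim_col (adj A) = dim_row A"
  by (auto simp: adj_def)

lemma adj_carrier[simp]: "A \<in> carrier_mat n m \<Longrightarrow> adj A \<in> carrier_mat m n"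
  by (auto simp: adj_def)

lemma adj_index[simp]: "i < dim_col A \<Longrightarrow> j < dim_row A \<Longrightarrow> adj A $$ (i,j) = cnj (A $$ (j,i))"
  by (auto simp: adj_def)

lemma adj_adj[simp]: "adj (adj A) = A"
  by (rule eq_matI) auto

lemma adj_mult:
  assumes "A \<in> carrier_mat n k" "B \<in> carrier_mat k m"
  shows "adj (A * B) = adj B * adj A"
proof (rule eq_matI)
  fix i j assume ij: "i < dim_row (adj B * adj A)" "j < dim_col (adj B * adj A)"
  hence i: "i < m" and j: "j < n" using assms by auto
  have "adj (A * B) $$ (i,j) = cnj ((A*B) $$ (j,i))" using assms i j by auto
  also have "\<dots> = (\<Sum>l<k. cnj (B $$ (l,i)) * cnj (A $$ (j,l)))"
    by (subst index_mult_mat_sum[OF assms(1,2) j i]) (simp add: cnj_sum mult.commute)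
  also have "\<dots> = (adj B * adj A) $$ (i,j)"
    by (subst index_mult_mat_sum[of _ m k _ n]) (use assms i j in auto)
  finally show "adj (A * B) $$ (i,j) = (adj B * adj A) $$ (i,j)" .
qed (use assms in auto)

lemma adj_one[simp]: "adj (1\<^sub>m n) = 1\<^sub>m n"
  by (rule eq_matI) auto

lemma adj_minus: "A \<in> carrier_mat n m \<Longrightarrow> B \<in> carrier_mat n m \<Longrightarrow> adj (A - B) = adj A - adj B"
  by (rule eq_matI) auto

lemma adj_smult: "adj (a \<cdot>\<^sub>m A) = cnj a \<cdot>\<^sub>m adj A"
  by (rule eq_matI) auto

lemma scalar_prod_mult_adj:
  assumes A: "A \<in> carrier_mat n k" and v: "v \<in> carrier_vec n" and w: "w \<in> carrier_vec k"
  shows "conjugate v \<bullet> (A *\<^sub>v w) = conjugate (adj A *\<^sub>v v) \<bullet> w"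
proof -
  have "conjugate v \<bullet> (A *\<^sub>v w) = (\<Sum>i<n. cnj (v $ i) * (\<Sum>l<k. A $$ (i,l) * w $ l))"
    using A v w by (auto simp: scalar_prod_def atLeast0LessThan index_mult_mat_vec_sum intro!: sum.cong)
  also have "\<dots> = (\<Sum>l<k. (\<Sum>i<n. cnj (v $ i) * A $$ (i,l)) * w $ l)"
    by (simp add: sum_distrib_left sum_distrib_right ac_simps) (rule sum.swap)
  also have "\<dots> = conjugate (adj A *\<^sub>v v) \<bullet> w"
    using A v w by (auto simp: scalar_prod_def atLeast0LessThan index_mult_mat_vec_sum[OF adj_carrier[OF A] v]
        cnj_sum ac_simps intro!: sum.cong)
  finally show ?thesis .
qed

definition unitary :: "nat \<Rightarrow> complex mat \<Rightarrow> bool" where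
  "unitary n U \<longleftrightarrow> U \<in> carrier_mat n n \<and> adj U * U = 1\<^sub>m n \<and> U * adj U = 1\<^sub>m n"

lemma unitary_carrier: "unitary n U \<Longrightarrow> U \<in> carrier_mat n n"
  by (simp add: unitary_def)

lemma unitary_one: "unitary n (1\<^sub>m n)"
  by (simp add: unitary_def)

lemma unitary_mult: assumes "unitary n U" "unitary n V" shows "unitary n (U * V)"
proof -
  have U: "U \<in> carrier_mat n n" and V: "V \<in> carrier_mat n n" using assms unitary_def by auto
  note cs = adj_mult assoc_mult_mat[of _ n n _ n _ n] mult_carrier_mat[of _ n n _ n]
  have "adj (U * V) * (U * V) = adj V * (adj U * U) * V" using U V by (simp add: cs)
  also have "\<dots> = 1\<^sub>m n" using assms U V unfolding unitary_def by simp
  finally have 1: "adj (U * V) * (U * V) = 1\<^sub>m n" .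
  have "(U * V) * adj (U * V) = U * (V * adj V) * adj U" using U V by (simp add: cs)
  also have "\<dots> = 1\<^sub>m n" using assms U V unfolding unitary_def by simp
  finally show ?thesis using 1 U V unfolding unitary_def by auto
qed

lemma unitary_cancel_left: "unitary n U \<Longrightarrow> X \<in> carrier_mat n k \<Longrightarrow> U * (adj U * X) = X"
  unfolding unitary_def by (simp add: assoc_mult_mat[of _ n n _ n _ k, symmetric])

lemma unitary_adj_mult_col:
  assumes V: "unitary n V" and i: "i < n"
  shows "adj V *\<^sub>v col V i = unit_vec n i"
proof -
  have Vc: "V \<in> carrier_mat n n" using V unitary_carrier by auto
  have "adj V *\<^sub>v col V i = col (adj V * V) i" using col_mult2[OF adj_carrier[OF Vc] Vc i] by simp
  also have "\<dots> = unit_vec n i" using V i unfolding unitary_def by simp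
  finally show ?thesis .
qed

definition real_diag_mat :: "nat \<Rightarrow> (nat \<Rightarrow> real) \<Rightarrow> complex mat" where
  "real_diag_mat n d = mat n n (\<lambda>(i,j). if i = j then complex_of_real (d i) else 0)"

lemma real_diag_mat_carrier[simp]: "real_diag_mat n d \<in> carrier_mat n n"
  by (simp add: real_diag_mat_def)

lemma real_diag_mat_index[simp]:
  "i < n \<Longrightarrow> j < n \<Longrightarrow> real_diag_mat n d $$ (i,j) = (if i = j then complex_of_real (d i) else 0)"
  by (simp add: real_diag_mat_def)

lemma real_diag_mat_dims[simp]: "dim_row (real_diag_mat n d) = n" "dim_col (real_diag_mat n d) = n"
  by (auto simp: real_diag_mat_def)

lemma adj_real_diag_mat[simp]: "adj (real_diag_mat n d) = real_diag_mat n d"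
  by (rule eq_matI) auto

lemma real_diag_mat_cong: "(\<And>i. i < n \<Longrightarrow> d i = e i) \<Longrightarrow> real_diag_mat n d = real_diag_mat n e"
  unfolding real_diag_mat_def by (auto intro!: cong_mat)

lemma real_diag_mat_mult: "real_diag_mat n d * real_diag_mat n e = real_diag_mat n (\<lambda>i. d i * e i)"
proof (rule eq_matI)
  fix i j assume "i < dim_row (real_diag_mat n (\<lambda>i. d i * e i))" "j < dim_col (real_diag_mat n (\<lambda>i. d i * e i))"
  hence i: "i < n" and j: "j < n" by auto
  have "(real_diag_mat n d * real_diag_mat n e) $$ (i,j) =
      (\<Sum>l<n. real_diag_mat n d $$ (i,l) * real_diag_mat n e $$ (l,j))"
    using i j by (intro index_mult_mat_sum) auto
  also have "\<dots> = (\<Sum>l\<in>{i}. real_diag_mat n d $$ (i,l) * real_diag_mat n e $$ (l,j))"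
    by (rule sum.mono_neutral_right) (use i j in auto)
  finally show "(real_diag_mat n d * real_diag_mat n e) $$ (i,j) = real_diag_mat n (\<lambda>i. d i * e i) $$ (i,j)"
    using i j by simp
qed auto

lemma real_diag_mat_mult_vec_index:
  assumes y: "y \<in> carrier_vec n" and i: "i < n"
  shows "(real_diag_mat n d *\<^sub>v y) $ i = complex_of_real (d i) * y $ i"
proof -
  have "(real_diag_mat n d *\<^sub>v y) $ i = (\<Sum>l<n. real_diag_mat n d $$ (i,l) * y $ l)"
    by (rule index_mult_mat_vec_sum) (use y i in auto)
  also have "\<dots> = (\<Sum>l\<in>{i}. real_diag_mat n d $$ (i,l) * y $ l)"
    by (rule sum.mono_neutral_right) (use i in auto)
  finally show ?thesis using i by simp
qed

lemma col_mult_real_diag_mat: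
  assumes V: "V \<in> carrier_mat n n" and k: "k < n"
  shows "col (V * real_diag_mat n e) k = complex_of_real (e k) \<cdot>\<^sub>v col V k"
proof (rule eq_vecI)
  fix i assume "i < dim_vec (complex_of_real (e k) \<cdot>\<^sub>v col V k)"
  hence i: "i < n" using V by simp
  have "col (V * real_diag_mat n e) k $ i = (V * real_diag_mat n e) $$ (i,k)" using V i k by simp
  also have "\<dots> = (\<Sum>p<n. V $$ (i,p) * real_diag_mat n e $$ (p,k))"
    by (rule index_mult_mat_sum[OF V real_diag_mat_carrier i k])
  also have "\<dots> = (\<Sum>p\<in>{k}. V $$ (i,p) * real_diag_mat n e $$ (p,k))"
    by (rule sum.mono_neutral_right) (use k in auto)
  finally show "col (V * real_diag_mat n e) k $ i = (complex_of_real (e k) \<cdot>\<^sub>v col V k) $ i"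
    using V i k by simp
qed (use V in simp)

section \<open>Unitary diagonalisation of Hermitian matrices\<close>

definition unitary_diag :: "nat \<Rightarrow> complex mat \<Rightarrow> (nat \<Rightarrow> real) \<Rightarrow> complex mat" where
  "unitary_diag n U d = U * real_diag_mat n d * adj U"

lemma unitary_diag_carrier[simp]: "unitary n U \<Longrightarrow> unitary_diag n U d \<in> carrier_mat n n"
  unfolding unitary_diag_def
  by (frule unitary_carrier) (metis adj_carrier real_diag_mat_carrier mult_carrier_mat)

lemma adj_unitary_diag: "unitary n U \<Longrightarrow> adj (unitary_diag n U d) = unitary_diag n U d"
  unfolding unitary_diag_def by (frule unitary_carrier)
    (simp add: adj_mult[of _ n n _ n] mult_carrier_mat[of _ n n _ n] assoc_mult_mat[of _ n n _ n _ n])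

lemma unitary_diag_cong: "(\<And>i. i < n \<Longrightarrow> d i = e i) \<Longrightarrow> unitary_diag n U d = unitary_diag n U e"
  unfolding unitary_diag_def by (simp cong: real_diag_mat_cong)

lemma unitary_diag_one: "unitary_diag n (1\<^sub>m n) d = real_diag_mat n d"
  by (simp add: unitary_diag_def)

lemma unitary_diag_mult:
  assumes U: "unitary n U"
  shows "unitary_diag n U d * unitary_diag n U e = unitary_diag n U (\<lambda>i. d i * e i)"
proof -
  have Uc: "U \<in> carrier_mat n n" using U unitary_carrier by auto
  note cs = mult_carrier_mat[of _ n n _ n] assoc_mult_mat[of _ n n _ n _ n]
  have "unitary_diag n U d * unitary_diag n U e =
      U * (real_diag_mat n d * ((adj U * U) * (real_diag_mat n e * adj U)))"
    unfolding unitary_diag_def using Uc by (simp add: cs)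
  also have "\<dots> = U * (real_diag_mat n d * real_diag_mat n e * adj U)"
    using U Uc unfolding unitary_def by (simp add: cs)
  also have "\<dots> = unitary_diag n U (\<lambda>i. d i * e i)"
    unfolding unitary_diag_def real_diag_mat_mult using Uc by (simp add: cs)
  finally show ?thesis .
qed

lemma unitary_diag_mult_unitary:
  assumes V: "unitary n V"
  shows "unitary_diag n V l * V = V * real_diag_mat n l"
proof -
  have Vc: "V \<in> carrier_mat n n" using V unitary_carrier by auto
  have "unitary_diag n V l * V = V * (real_diag_mat n l * (adj V * V))"
    unfolding unitary_diag_def using Vc
    by (simp add: assoc_mult_mat[of _ n n _ n _ n] mult_carrier_mat[of _ n n _ n])
  also have "\<dots> = V * real_diag_mat n l" using V Vc unfolding unitary_def by simp
  finally show ?thesis .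
qed

lemma index_unitary_diag:
  assumes U: "U \<in> carrier_mat n n" and i: "i < n" and j: "j < n"
  shows "(U * real_diag_mat n d * adj U) $$ (i,j) =
    (\<Sum>l<n. U $$ (i,l) * complex_of_real (d l) * cnj (U $$ (j,l)))"
proof -
  have ud: "(U * real_diag_mat n d) $$ (i,l) = U $$ (i,l) * complex_of_real (d l)"
    if "i < n" "l < n" for i l
  proof -
    have "(U * real_diag_mat n d) $$ (i,l) = (\<Sum>p<n. U $$ (i,p) * real_diag_mat n d $$ (p,l))"
      by (rule index_mult_mat_sum) (use U that in auto)
    also have "\<dots> = (\<Sum>p\<in>{l}. U $$ (i,p) * real_diag_mat n d $$ (p,l))"
      by (rule sum.mono_neutral_right) (use that in auto)
    finally show ?thesis using that by simp
  qed
  show ?thesis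
    by (subst index_mult_mat_sum[of _ n n _ n]) (use U i j ud in auto)
qed

lemma quad_form_unitary_diag:
  assumes U: "unitary n U" and v: "v \<in> carrier_vec n"
  shows "conjugate v \<bullet> (unitary_diag n U d *\<^sub>v v) =
     (\<Sum>i<n. complex_of_real (d i * (cmod ((adj U *\<^sub>v v) $ i))^2))"
proof -
  have Uc: "U \<in> carrier_mat n n" using U unitary_carrier by auto
  define y where "y = adj U *\<^sub>v v"
  have y: "y \<in> carrier_vec n" using mult_mat_vec_carrier[OF adj_carrier[OF Uc] v] y_def by auto
  have "unitary_diag n U d *\<^sub>v v = U *\<^sub>v (real_diag_mat n d *\<^sub>v y)"
    unfolding unitary_diag_def y_def using Uc v
    by (simp add: assoc_mult_mat_vec[of _ n n _ n] mult_carrier_mat[of _ n n _ n]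
        mult_mat_vec_carrier[OF adj_carrier[OF Uc] v])
  hence "conjugate v \<bullet> (unitary_diag n U d *\<^sub>v v) = conjugate y \<bullet> (real_diag_mat n d *\<^sub>v y)"
    using scalar_prod_mult_adj[OF Uc v, of "real_diag_mat n d *\<^sub>v y"]
      mult_mat_vec_carrier[OF real_diag_mat_carrier y] y_def by simp
  also have "\<dots> = (\<Sum>i<n. cnj (y $ i) * (complex_of_real (d i) * y $ i))"
    using y by (auto simp: scalar_prod_def atLeast0LessThan real_diag_mat_mult_vec_index
        simp del: index_mult_mat_vec intro!: sum.cong)
  also have "\<dots> = (\<Sum>i<n. complex_of_real (d i * (cmod (y $ i))^2))"
    by (rule sum.cong, simp, simp only: of_real_mult complex_norm_square, simp add: ac_simps)
  finally show ?thesis unfolding y_def .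
qed

lemma unitary_adj_preserves_norm:
  assumes V: "unitary n V" and w: "w \<in> carrier_vec n"
  shows "(\<Sum>i<n. (cmod ((adj V *\<^sub>v w) $ i))^2) = (\<Sum>i<n. (cmod (w $ i))^2)"
proof -
  have "real_diag_mat n (\<lambda>_. 1) = 1\<^sub>m n" by (rule eq_matI) auto
  hence "unitary_diag n V (\<lambda>_. 1) = 1\<^sub>m n"
    using V unitary_carrier[OF V] by (simp add: unitary_diag_def unitary_def)
  hence "conjugate w \<bullet> w = (\<Sum>i<n. complex_of_real (1 * (cmod ((adj V *\<^sub>v w) $ i))^2))"
    using quad_form_unitary_diag[OF V w, of "\<lambda>_. 1"] w by simp
  hence "complex_of_real (\<Sum>i<n. (cmod (w $ i))^2) =
      complex_of_real (\<Sum>i<n. (cmod ((adj V *\<^sub>v w) $ i))^2)"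
    unfolding conjugate_scalar_prod_self[OF w] by simp
  thus ?thesis by (simp only: of_real_eq_iff)
qed

definition diag_block :: "complex \<Rightarrow> complex mat \<Rightarrow> complex mat" where
  "diag_block e X = mat (Suc (dim_row X)) (Suc (dim_col X))
     (\<lambda>(i,j). if i = 0 then (if j = 0 then e else 0) else if j = 0 then 0 else X $$ (i-1,j-1))"

lemma diag_block_carrier[simp]: "X \<in> carrier_mat m k \<Longrightarrow> diag_block e X \<in> carrier_mat (Suc m) (Suc k)"
  by (auto simp: diag_block_def)

lemma diag_block_dims[simp]:
  "dim_row (diag_block e X) = Suc (dim_row X)" "dim_col (diag_block e X) = Suc (dim_col X)"
  by (auto simp: diag_block_def)

lemma diag_block_index:
  "i < Suc (dim_row X) \<Longrightarrow> j < Suc (dim_col X) \<Longrightarrow> diag_block e X $$ (i,j) =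
   (if i = 0 then (if j = 0 then e else 0) else if j = 0 then 0 else X $$ (i-1,j-1))"
  by (auto simp: diag_block_def)

lemma diag_block_mult:
  assumes X: "X \<in> carrier_mat m k" and Y: "Y \<in> carrier_mat k l"
  shows "diag_block e X * diag_block f Y = diag_block (e * f) (X * Y)"
proof (rule eq_matI)
  fix i j assume "i < dim_row (diag_block (e * f) (X * Y))" "j < dim_col (diag_block (e * f) (X * Y))"
  hence i: "i < Suc m" and j: "j < Suc l" using X Y by auto
  have "(diag_block e X * diag_block f Y) $$ (i,j) =
      (\<Sum>p<Suc k. diag_block e X $$ (i,p) * diag_block f Y $$ (p,j))"
    by (rule index_mult_mat_sum) (use X Y i j in auto)
  also have "\<dots> = diag_block e X $$ (i,0) * diag_block f Y $$ (0,j) +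
      (\<Sum>p<k. diag_block e X $$ (i,Suc p) * diag_block f Y $$ (Suc p,j))"
    by (subst sum.lessThan_Suc_shift) simp
  also have "\<dots> = diag_block (e * f) (X * Y) $$ (i,j)"
  proof (cases i; cases j)
    fix i' j' assume i': "i = Suc i'" and j': "j = Suc j'"
    have "(X * Y) $$ (i', j') = (\<Sum>p<k. X $$ (i',p) * Y $$ (p,j'))"
      by (rule index_mult_mat_sum) (use X Y i j i' j' in auto)
    then show ?thesis using X Y i j i' j' by (auto simp: diag_block_index)
  qed (use X Y i j in \<open>auto simp: diag_block_index\<close>)
  finally show "(diag_block e X * diag_block f Y) $$ (i,j) = diag_block (e * f) (X * Y) $$ (i,j)" .
qed (use X Y in auto)

lemma adj_diag_block: "adj (diag_block e X) = diag_block (cnj e) (adj X)"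
  by (rule eq_matI) (auto simp: diag_block_index)

lemma diag_block_one: "diag_block 1 (1\<^sub>m m) = 1\<^sub>m (Suc m)"
  by (rule eq_matI) (auto simp: diag_block_index)

lemma diag_block_real_diag_mat:
  "diag_block (complex_of_real a) (real_diag_mat m d) =
    real_diag_mat (Suc m) (\<lambda>i. if i = 0 then a else d (i - 1))"
  by (rule eq_matI) (auto simp: diag_block_index)

lemma unitary_diag_block: assumes "unitary m U" shows "unitary (Suc m) (diag_block 1 U)"
proof -
  have U: "U \<in> carrier_mat m m" using assms unitary_def by auto
  show ?thesis using assms unfolding unitary_def
    by (auto simp: adj_diag_block diag_block_mult[OF adj_carrier[OF U] U]
        diag_block_mult[OF U adj_carrier[OF U]] diag_block_one)
qed

lemma unitary_normalize_corthogonal: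
  assumes lws: "length ws = n" and wsc: "set ws \<subseteq> carrier_vec n" and orth: "corthogonal ws"
  defines "nr j \<equiv> sqrt (\<Sum>k<n. (cmod (ws ! j $ k))^2)"
  shows "unitary n (mat n n (\<lambda>(i,j). ws ! j $ i / complex_of_real (nr j)))"
proof -
  have wsc: "ws ! j \<in> carrier_vec n" if "j < n" for j using wsc lws that by auto
  have nrsq: "ws ! j \<bullet>c ws ! j = complex_of_real ((nr j)^2)" if j: "j < n" for j
    using conjugate_scalar_prod_self[OF wsc[OF j]] conjugate_vec_sprod_comm[OF wsc[OF j] wsc[OF j]]
    by (simp add: nr_def sum_nonneg)
  have nrpos: "nr j \<noteq> 0" if j: "j < n" for j
  proof
    assume "nr j = 0"
    hence "ws ! j \<bullet>c ws ! j = 0" using nrsq[OF j] by simp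
    thus False using corthogonalD[OF orth, of j j] j lws by auto
  qed
  define W where "W = mat n n (\<lambda>(i,j). ws ! j $ i / complex_of_real (nr j))"
  have W: "W \<in> carrier_mat n n" unfolding W_def by auto
  have WW: "adj W * W = 1\<^sub>m n"
  proof (rule eq_matI)
    fix i j assume "i < dim_row (1\<^sub>m n)" "j < dim_col (1\<^sub>m n)"
    hence i: "i < n" and j: "j < n" by auto
    have "(adj W * W) $$ (i,j) = (\<Sum>k<n. cnj (ws ! i $ k / complex_of_real (nr i)) *
        (ws ! j $ k / complex_of_real (nr j)))"
      by (subst index_mult_mat_sum[of _ n n _ n]) (use W i j in \<open>auto simp: W_def\<close>)
    also have "\<dots> = (ws ! j \<bullet>c ws ! i) / (complex_of_real (nr i) * complex_of_real (nr j))"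
      unfolding cscalar_prod_sum[OF wsc[OF j] wsc[OF i]] sum_divide_distrib
      by (rule sum.cong) (auto simp: field_simps)
    also have "\<dots> = 1\<^sub>m n $$ (i,j)"
    proof (cases "i = j")
      case True
      then show ?thesis using i nrsq[OF i] nrpos[OF i] by (simp add: power2_eq_square)
    next
      case False
      then show ?thesis using corthogonalD[OF orth, of j i] i j lws by auto
    qed
    finally show "(adj W * W) $$ (i,j) = 1\<^sub>m n $$ (i,j)" .
  qed (use W in auto)
  have "W * adj W = 1\<^sub>m n" using mat_mult_left_right_inverse[OF adj_carrier[OF W] W WW] .
  thus ?thesis using W WW unfolding unitary_def W_def by auto
qed

lemma unitary_with_first_col:
  assumes v: "v \<in> carrier_vec n" and v0: "v \<noteq> 0\<^sub>v n"
  shows "\<exists>W r. unitary n W \<and> (\<forall>k<n. W $$ (k,0) = r * v $ k)"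
proof -
  interpret cof_vec_space n "TYPE(complex)" .
  define b where "b = basis_completion v"
  note bc = basis_completion[OF v v0, folded b_def]
  define ws where "ws = gram_schmidt n b"
  note gs = gram_schmidt_result[OF bc(2) bc(4) bc(5) ws_def]
  have lws: "length ws = n" using gs(4) bc(6) by simp
  have "n \<noteq> 0" using v v0 by auto
  with bc(6,7) obtain vs where "b = v # vs" by (cases b) auto
  hence "hd ws = v" unfolding ws_def using gram_schmidt_hd[OF v] by simp
  hence ws0: "ws ! 0 = v" using lws \<open>n \<noteq> 0\<close> by (cases ws) auto
  define r where "r = sqrt (\<Sum>k<n. (cmod (ws ! 0 $ k))^2)"
  have "\<forall>k<n. mat n n (\<lambda>(i,j). ws ! j $ i / complex_of_real (sqrt (\<Sum>k<n. (cmod (ws ! j $ k))^2))) $$ (k,0) =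
      inverse (complex_of_real r) * v $ k"
    using ws0 \<open>n \<noteq> 0\<close> by (simp add: r_def field_simps)
  with unitary_normalize_corthogonal[OF lws gs(3) gs(2)] show ?thesis by blast
qed

lemma hermitian_first_col_block:
  assumes B: "B \<in> carrier_mat (Suc m) (Suc m)" and hB: "adj B = B"
    and col: "\<forall>i<Suc m. B $$ (i,0) = (if i = 0 then e else 0)"
  shows "\<exists>B'. B' \<in> carrier_mat m m \<and> adj B' = B' \<and> B = diag_block (complex_of_real (Re e)) B'"
proof -
  have row: "B $$ (0,j) = cnj (B $$ (j,0))" if j: "j < Suc m" for j
    using hB B j by (metis adj_index carrier_matD zero_less_Suc)
  have ereal: "e = complex_of_real (Re e)"
    using row[of 0] col by (simp add: complex_eq_iff)
  define B' where "B' = mat m m (\<lambda>(i,j). B $$ (Suc i, Suc j))"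
  have B': "B' \<in> carrier_mat m m" unfolding B'_def by auto
  have "adj B' = B'"
  proof (rule eq_matI)
    fix i j assume "i < dim_row B'" "j < dim_col B'"
    hence i: "i < m" and j: "j < m" using B' by auto
    have "adj B' $$ (i,j) = adj B $$ (Suc i, Suc j)" using B i j by (simp add: B'_def)
    then show "adj B' $$ (i,j) = B' $$ (i,j)" using hB i j by (simp add: B'_def)
  qed (use B' in auto)
  moreover have "B = diag_block (complex_of_real (Re e)) B'"
  proof (rule eq_matI)
    fix i j assume "i < dim_row (diag_block (complex_of_real (Re e)) B')"
      "j < dim_col (diag_block (complex_of_real (Re e)) B')"
    hence i: "i < Suc m" and j: "j < Suc m" using B' by auto
    show "B $$ (i,j) = diag_block (complex_of_real (Re e)) B' $$ (i,j)"
    proof (cases "i = 0")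
      case True
      then show ?thesis using row[OF j] col j B' ereal by (auto simp: diag_block_index)
    next
      case False
      then show ?thesis using col i j B' by (cases j) (auto simp: diag_block_index B'_def)
    qed
  qed (use B B' in auto)
  ultimately show ?thesis using B' by blast
qed

lemma hermitian_deflate:
  assumes A: "A \<in> carrier_mat (Suc m) (Suc m)" and hA: "adj A = A" and W: "unitary (Suc m) W"
    and Av: "A *\<^sub>v v = e \<cdot>\<^sub>v v" and v: "v \<in> carrier_vec (Suc m)"
    and W0: "\<forall>k<Suc m. W $$ (k,0) = r * v $ k"
  shows "\<exists>B. B \<in> carrier_mat m m \<and> adj B = B \<and>
    adj W * A * W = diag_block (complex_of_real (Re e)) B"
proof -
  define n where "n = Suc m"
  have Wc: "W \<in> carrier_mat n n" using W unitary_carrier n_def by auto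
  note cs = adj_mult[of _ n n _ n] mult_carrier_mat[of _ n n _ n] assoc_mult_mat[of _ n n _ n _ n]
  have eig: "(A * W) $$ (k,0) = e * W $$ (k,0)" if k: "k < n" for k
  proof -
    have "(A * W) $$ (k,0) = (\<Sum>l<n. A $$ (k,l) * W $$ (l,0))"
      using A Wc k by (intro index_mult_mat_sum) (auto simp: n_def)
    also have "\<dots> = r * (\<Sum>l<n. A $$ (k,l) * v $ l)"
      unfolding sum_distrib_left by (rule sum.cong) (use W0 n_def in auto)
    also have "\<dots> = r * (A *\<^sub>v v) $ k" using index_mult_mat_vec_sum[of A n n v k] A v k n_def by simp
    finally show ?thesis using Av k v W0 n_def by simp
  qed
  define A' where "A' = adj W * A * W"
  have A': "A' \<in> carrier_mat n n" unfolding A'_def using A Wc n_def by auto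
  have hA': "adj A' = A'" unfolding A'_def using A Wc hA n_def by (simp add: cs)
  have "A' $$ (i,0) = (if i = 0 then e else 0)" if i: "i < n" for i
  proof -
    have "A' = adj W * (A * W)" unfolding A'_def using A Wc n_def by (simp add: cs)
    hence "A' $$ (i,0) = (\<Sum>k<n. adj W $$ (i,k) * (A * W) $$ (k,0))"
      using index_mult_mat_sum[OF adj_carrier[OF Wc] mult_carrier_mat[OF _ Wc] i, of A 0] A n_def
      by simp
    also have "\<dots> = e * (\<Sum>k<n. adj W $$ (i,k) * W $$ (k,0))"
      unfolding sum_distrib_left by (rule sum.cong) (use eig in auto)
    also have "\<dots> = e * (adj W * W) $$ (i,0)"
      by (subst index_mult_mat_sum[of _ n n _ n]) (use Wc i n_def in auto)
    finally show ?thesis using W i n_def unfolding unitary_def by simp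
  qed
  then show ?thesis
    using hermitian_first_col_block[of A' m e] A' hA' n_def unfolding A'_def by auto
qed

theorem hermitian_unitary_diagonalization:
  "A \<in> carrier_mat n n \<Longrightarrow> adj A = A \<Longrightarrow> \<exists>U d. unitary n U \<and> A = unitary_diag n U d"
proof (induction n arbitrary: A)
  case 0
  then show ?case
    using unitary_one[of 0] by (auto simp: unitary_diag_def intro!: eq_matI exI[of _ "\<lambda>_. 0"])
next
  case (Suc m A)
  define n where "n = Suc m"
  have A: "A \<in> carrier_mat n n" and hA: "adj A = A" using Suc n_def by auto
  obtain e where "e \<in> spectrum A" using spectrum_non_empty[OF A] n_def by auto
  then obtain v where "eigenvector A v e" unfolding spectrum_def eigenvalue_def by auto
  hence v: "v \<in> carrier_vec n" and v0: "v \<noteq> 0\<^sub>v n" and Av: "A *\<^sub>v v = e \<cdot>\<^sub>v v"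
    unfolding eigenvector_def using A by auto
  obtain W r where W: "unitary n W" and W0: "\<forall>k<n. W $$ (k,0) = r * v $ k"
    using unitary_with_first_col[OF v v0] by blast
  have Wc: "W \<in> carrier_mat n n" using W unitary_carrier by auto
  obtain B where Bc: "B \<in> carrier_mat m m" and hB: "adj B = B"
    and AB: "adj W * A * W = diag_block (complex_of_real (Re e)) B"
    using hermitian_deflate[of A m W v e r] A hA W Av v W0 n_def by auto
  obtain U d where U: "unitary m U" and Bd: "B = unitary_diag m U d"
    using Suc.IH[OF Bc hB] by auto
  have Uc: "U \<in> carrier_mat m m" using U unitary_carrier by auto
  define E where "E = diag_block 1 U"
  have E: "unitary n E" unfolding E_def n_def using unitary_diag_block[OF U] .
  have Ec: "E \<in> carrier_mat n n" using E unitary_carrier by auto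
  define d' where "d' i = (if i = 0 then Re e else d (i - 1))" for i
  have "adj W * A * W = E * real_diag_mat n d' * adj E"
    unfolding AB Bd unitary_diag_def E_def adj_diag_block n_def d'_def
    using Uc by (simp add: diag_block_mult[of _ m m _ m] diag_block_real_diag_mat[symmetric])
  hence "W * (E * real_diag_mat n d' * adj E) * adj W = W * (adj W * (A * W)) * adj W"
    using A Wc by (simp add: assoc_mult_mat[of _ n n _ n _ n])
  also have "\<dots> = A"
    using unitary_cancel_left[OF W, of "A * W" n] A Wc W
    by (simp add: assoc_mult_mat[OF A Wc adj_carrier[OF Wc]] unitary_def)
  finally have "A = W * (E * real_diag_mat n d' * adj E) * adj W" ..
  also have "\<dots> = unitary_diag n (W * E) d'"
    using Wc Ec by (simp add: unitary_diag_def adj_mult[of _ n n _ n]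
        assoc_mult_mat[of _ n n _ n _ n] mult_carrier_mat[of _ n n _ n])
  finally show ?case using unitary_mult[OF W E] n_def by blast
qed

section \<open>Positive semidefinite matrices and Gram matrices\<close>

lemma psd_carrier: "psd n X \<Longrightarrow> X \<in> carrier_mat n n"
  by (simp add: psd_def)

lemma psd_adj: "psd n X \<Longrightarrow> adj X = X"
  by (simp add: psd_def)

lemma psd_unitary_diag:
  assumes U: "unitary n U" and d: "\<forall>i<n. d i \<ge> 0"
  shows "psd n (unitary_diag n U d)"
  unfolding psd_def using U adj_unitary_diag[OF U] quad_form_unitary_diag[OF U] d
  by (auto simp: Re_sum intro!: sum_nonneg)

lemma psd_unitary_diagonalization:
  assumes "psd n A"
  shows "\<exists>U d. unitary n U \<and> A = unitary_diag n U d \<and> (\<forall>i<n. d i \<ge> 0)"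
proof -
  obtain U d where U: "unitary n U" and Ad: "A = unitary_diag n U d"
    using hermitian_unitary_diagonalization[OF psd_carrier psd_adj] assms by blast
  have Uc: "U \<in> carrier_mat n n" using U unitary_carrier by auto
  have "d i \<ge> 0" if i: "i < n" for i
  proof -
    define v where "v = col U i"
    have v: "v \<in> carrier_vec n" using Uc i v_def by simp
    have "0 \<le> Re (conjugate v \<bullet> (A *\<^sub>v v))" using assms v unfolding psd_def by auto
    also have "conjugate v \<bullet> (A *\<^sub>v v) =
        (\<Sum>l<n. complex_of_real (d l * (cmod (unit_vec n i $ l))^2))"
      using quad_form_unitary_diag[OF U v, of d] unitary_adj_mult_col[OF U i] Ad v_def by simp
    also have "\<dots> = (\<Sum>l\<in>{i}. complex_of_real (d l * (cmod (unit_vec n i $ l))^2))"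
      by (rule sum.mono_neutral_right) (use i in auto)
    finally show ?thesis using i by simp
  qed
  thus ?thesis using U Ad by auto
qed

lemma Re_quad_form_smult_minus:
  fixes A B :: "complex mat"
  assumes A: "A \<in> carrier_mat n n" and B: "B \<in> carrier_mat n n" and v: "v \<in> carrier_vec n"
  shows "Re (conjugate v \<bullet> ((complex_of_real a \<cdot>\<^sub>m A - B) *\<^sub>v v)) =
    a * Re (conjugate v \<bullet> (A *\<^sub>v v)) - Re (conjugate v \<bullet> (B *\<^sub>v v))"
proof -
  have "(complex_of_real a \<cdot>\<^sub>m A - B) *\<^sub>v v = complex_of_real a \<cdot>\<^sub>v (A *\<^sub>v v) - B *\<^sub>v v"
    using A B v by (subst minus_mult_distrib_mat_vec[of _ n n])
      (auto intro!: eq_vecI simp: scalar_prod_def sum_distrib_left ac_simps)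
  thus ?thesis using A B v by (simp add: scalar_prod_minus_distrib[of _ n])
qed

lemma loewner_le_smult_iff:
  assumes H: "psd n H" and P: "psd n P"
  shows "loewner_le n P (complex_of_real C \<cdot>\<^sub>m H) \<longleftrightarrow>
    (\<forall>v \<in> carrier_vec n. Re (conjugate v \<bullet> (P *\<^sub>v v)) \<le> C * Re (conjugate v \<bullet> (H *\<^sub>v v)))"
proof -
  have Hc: "H \<in> carrier_mat n n" and Pc: "P \<in> carrier_mat n n" using H P psd_carrier by auto
  have "adj (complex_of_real C \<cdot>\<^sub>m H - P) = complex_of_real C \<cdot>\<^sub>m H - P"
    using Hc Pc psd_adj[OF H] psd_adj[OF P] by (simp add: adj_minus[of _ n n] adj_smult)
  then show ?thesis
    unfolding loewner_le_def psd_def using Hc Pc Re_quad_form_smult_minus[OF Hc Pc] by auto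
qed

lemma psd_congruence:
  assumes P: "psd n P" and S: "S \<in> carrier_mat n n" and hS: "adj S = S"
  shows "psd n (S * P * S)"
    and "\<And>x. x \<in> carrier_vec n \<Longrightarrow>
      conjugate x \<bullet> ((S * P * S) *\<^sub>v x) = conjugate (S *\<^sub>v x) \<bullet> (P *\<^sub>v (S *\<^sub>v x))"
proof -
  have Pc: "P \<in> carrier_mat n n" using P psd_carrier by auto
  show q: "conjugate x \<bullet> ((S * P * S) *\<^sub>v x) = conjugate (S *\<^sub>v x) \<bullet> (P *\<^sub>v (S *\<^sub>v x))"
    if x: "x \<in> carrier_vec n" for x
  proof -
    have "(S * P * S) *\<^sub>v x = S *\<^sub>v (P *\<^sub>v (S *\<^sub>v x))"
      using S Pc x by (simp add: assoc_mult_mat_vec[of _ n n _ n] mult_carrier_mat[of _ n n _ n])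
    thus ?thesis using scalar_prod_mult_adj[OF S x, of "P *\<^sub>v (S *\<^sub>v x)"] hS S Pc x by simp
  qed
  have "adj (S * P * S) = S * P * S"
    using S Pc hS psd_adj[OF P]
    by (simp add: adj_mult[of _ n n _ n] mult_carrier_mat[of _ n n _ n] assoc_mult_mat[of _ n n _ n _ n])
  moreover have "0 \<le> Re (conjugate x \<bullet> ((S * P * S) *\<^sub>v x))" if x: "x \<in> carrier_vec n" for x
    unfolding q[OF x] using P S x unfolding psd_def by auto
  ultimately show "psd n (S * P * S)" unfolding psd_def using S Pc by auto
qed

lemma quad_form_add_kernel:
  fixes P :: "complex mat"
  assumes P: "P \<in> carrier_mat n n" and hP: "adj P = P"
    and x: "x \<in> carrier_vec n" and z: "z \<in> carrier_vec n" and Pz: "P *\<^sub>v z = 0\<^sub>v n"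
  shows "conjugate (x + z) \<bullet> (P *\<^sub>v (x + z)) = conjugate x \<bullet> (P *\<^sub>v x)"
proof -
  have Px: "P *\<^sub>v x \<in> carrier_vec n" using P x by simp
  have "P *\<^sub>v (x + z) = P *\<^sub>v x" using mult_add_distrib_mat_vec[OF P x z] Pz Px by simp
  moreover have "conjugate (x + z) \<bullet> (P *\<^sub>v x) = conjugate x \<bullet> (P *\<^sub>v x) + conjugate z \<bullet> (P *\<^sub>v x)"
    unfolding conjugate_add_vec[OF x z] by (rule add_scalar_prod_distrib[of _ n]) (use x z Px in auto)
  moreover have "conjugate z \<bullet> (P *\<^sub>v x) = 0"
    using scalar_prod_mult_adj[OF P z x] hP Pz x by simp
  ultimately show ?thesis by simp
qed

definition gram_mat :: "nat \<Rightarrow> 'k set \<Rightarrow> ('k \<Rightarrow> nat \<Rightarrow> complex) \<Rightarrow> complex mat" where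
  "gram_mat n K w = mat n n (\<lambda>(i,j). \<Sum>k\<in>K. w k i * cnj (w k j))"

lemma gram_mat_carrier[simp]: "gram_mat n K w \<in> carrier_mat n n"
  by (simp add: gram_mat_def)

lemma gram_mat_dims[simp]: "dim_row (gram_mat n K w) = n" "dim_col (gram_mat n K w) = n"
  by (auto simp: gram_mat_def)

lemma gram_mat_index[simp]:
  "i < n \<Longrightarrow> j < n \<Longrightarrow> gram_mat n K w $$ (i,j) = (\<Sum>k\<in>K. w k i * cnj (w k j))"
  by (simp add: gram_mat_def)

lemma quad_form_gram_mat:
  assumes v: "v \<in> carrier_vec n"
  shows "conjugate v \<bullet> (gram_mat n K w *\<^sub>v v) =
    complex_of_real (\<Sum>k\<in>K. (cmod (\<Sum>j<n. cnj (w k j) * v $ j))^2)"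
proof -
  have "conjugate v \<bullet> (gram_mat n K w *\<^sub>v v) =
      (\<Sum>i<n. cnj (v $ i) * (\<Sum>j<n. (\<Sum>k\<in>K. w k i * cnj (w k j)) * v $ j))"
    using v by (auto simp: scalar_prod_def atLeast0LessThan
        index_mult_mat_vec_sum[OF gram_mat_carrier v] intro!: sum.cong)
  also have "\<dots> = (\<Sum>i<n. \<Sum>k\<in>K. \<Sum>j<n. cnj (v $ i) * w k i * (cnj (w k j) * v $ j))"
    by (simp add: sum_distrib_left sum_distrib_right ac_simps) (rule sum.cong[OF refl], rule sum.swap)
  also have "\<dots> = (\<Sum>k\<in>K. (\<Sum>i<n. cnj (v $ i) * w k i) * (\<Sum>j<n. cnj (w k j) * v $ j))"
    by (subst sum.swap) (simp add: sum_product)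
  also have "\<dots> = (\<Sum>k\<in>K. complex_of_real ((cmod (\<Sum>j<n. cnj (w k j) * v $ j))^2))"
  proof (rule sum.cong[OF refl])
    fix k
    have "(\<Sum>i<n. cnj (v $ i) * w k i) = cnj (\<Sum>j<n. cnj (w k j) * v $ j)"
      by (simp add: cnj_sum ac_simps)
    thus "(\<Sum>i<n. cnj (v $ i) * w k i) * (\<Sum>j<n. cnj (w k j) * v $ j) =
      complex_of_real ((cmod (\<Sum>j<n. cnj (w k j) * v $ j))^2)"
      by (simp only: complex_norm_square) (simp add: ac_simps)
  qed
  finally show ?thesis by simp
qed

lemma gram_mat_mult_vec_eq_0_iff:
  assumes K: "finite K" and z: "z \<in> carrier_vec n"
  shows "gram_mat n K w *\<^sub>v z = 0\<^sub>v n \<longleftrightarrow> (\<forall>k\<in>K. (\<Sum>j<n. cnj (w k j) * z $ j) = 0)"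
proof
  assume Hz: "gram_mat n K w *\<^sub>v z = 0\<^sub>v n"
  have "complex_of_real (\<Sum>k\<in>K. (cmod (\<Sum>j<n. cnj (w k j) * z $ j))^2) =
      conjugate z \<bullet> (gram_mat n K w *\<^sub>v z)"
    by (rule quad_form_gram_mat[OF z, symmetric])
  also have "\<dots> = 0" using Hz z by simp
  finally have "(\<Sum>k\<in>K. (cmod (\<Sum>j<n. cnj (w k j) * z $ j))^2) = 0"
    by (simp only: of_real_eq_0_iff)
  then show "\<forall>k\<in>K. (\<Sum>j<n. cnj (w k j) * z $ j) = 0"
    using sum_nonneg_eq_0_iff[OF K, where f = "\<lambda>k. (cmod (\<Sum>j<n. cnj (w k j) * z $ j))^2"] by auto
next
  assume zero: "\<forall>k\<in>K. (\<Sum>j<n. cnj (w k j) * z $ j) = 0"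
  show "gram_mat n K w *\<^sub>v z = 0\<^sub>v n"
  proof (rule eq_vecI)
    fix i assume "i < dim_vec (0\<^sub>v n :: complex vec)"
    hence i: "i < n" by simp
    have "(gram_mat n K w *\<^sub>v z) $ i = (\<Sum>j<n. (\<Sum>k\<in>K. w k i * cnj (w k j)) * z $ j)"
      using index_mult_mat_vec_sum[OF gram_mat_carrier z i] i by simp
    also have "\<dots> = (\<Sum>k\<in>K. w k i * (\<Sum>j<n. cnj (w k j) * z $ j))"
      by (simp add: sum_distrib_left sum_distrib_right ac_simps) (rule sum.swap)
    also have "\<dots> = 0" using zero by simp
    finally show "(gram_mat n K w *\<^sub>v z) $ i = (0\<^sub>v n :: complex vec) $ i" using i by simp
  qed simp
qed

lemma psd_gram_mat: "psd n (gram_mat n K w)"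
proof -
  have "adj (gram_mat n K w) = gram_mat n K w"
    by (rule eq_matI) (auto simp: cnj_sum mult.commute)
  moreover have "0 \<le> Re (conjugate v \<bullet> (gram_mat n K w *\<^sub>v v))" if "v \<in> carrier_vec n" for v
    by (subst quad_form_gram_mat[OF that], subst Re_complex_of_real, rule sum_nonneg, simp)
  ultimately show ?thesis unfolding psd_def by auto
qed

lemma psd_eq_gram_mat:
  assumes "psd n A"
  shows "\<exists>w. A = gram_mat n {..<n} w"
proof -
  obtain U d where U: "unitary n U" and A: "A = unitary_diag n U d" and d: "\<forall>i<n. d i \<ge> 0"
    using psd_unitary_diagonalization[OF assms] by auto
  have Uc: "U \<in> carrier_mat n n" using U unitary_carrier by auto
  define w where "w k i = complex_of_real (sqrt (d k)) * U $$ (i,k)" for k i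
  have "A = gram_mat n {..<n} w"
  proof (rule eq_matI)
    fix i j assume "i < dim_row (gram_mat n {..<n} w)" "j < dim_col (gram_mat n {..<n} w)"
    hence i: "i < n" and j: "j < n" by auto
    have "A $$ (i,j) = (\<Sum>l<n. U $$ (i,l) * complex_of_real (d l) * cnj (U $$ (j,l)))"
      unfolding A unitary_diag_def using index_unitary_diag[OF Uc i j] .
    also have "\<dots> = gram_mat n {..<n} w $$ (i,j)"
    proof -
      have "complex_of_real (d l) = complex_of_real (sqrt (d l)) * complex_of_real (sqrt (d l))"
        if "l < n" for l
        using d that by (simp flip: of_real_mult)
      thus ?thesis using i j unfolding w_def by (auto intro!: sum.cong simp: ac_simps)
    qed
    finally show "A $$ (i,j) = gram_mat n {..<n} w $$ (i,j)" .
  qed (use A U unitary_diag_carrier[OF U, of d] in \<open>auto simp del: unitary_diag_carrier\<close>)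
  thus ?thesis by auto
qed

section \<open>Entrywise functions of Gram matrices\<close>

definition list_monom :: "('k \<Rightarrow> nat \<Rightarrow> complex) \<Rightarrow> 'k list \<Rightarrow> nat \<Rightarrow> complex" where
  "list_monom w t i = prod_list (map (\<lambda>k. w k i) t)"

definition lists_of_len :: "'k set \<Rightarrow> nat \<Rightarrow> 'k list set" where
  "lists_of_len K m = {t. set t \<subseteq> K \<and> length t = m}"

lemma finite_lists_of_len: "finite K \<Longrightarrow> finite (lists_of_len K m)"
  unfolding lists_of_len_def by (rule finite_lists_length_eq)

lemma lists_of_len_Suc: "lists_of_len K (Suc m) = (\<lambda>(k,t). k # t) ` (K \<times> lists_of_len K m)"
  unfolding lists_of_len_def by (auto simp: length_Suc_conv image_iff)

lemma power_sum_eq_sum_lists_of_len: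
  fixes f :: "'k \<Rightarrow> 'a :: comm_semiring_1"
  assumes K: "finite K"
  shows "(\<Sum>k\<in>K. f k) ^ m = (\<Sum>t\<in>lists_of_len K m. prod_list (map f t))"
proof (induction m)
  case 0
  have "lists_of_len K 0 = {[]}" unfolding lists_of_len_def by auto
  then show ?case by simp
next
  case (Suc m)
  have inj: "inj_on (\<lambda>(k,t). k # t) (K \<times> lists_of_len K m)" by (auto simp: inj_on_def)
  have "(\<Sum>k\<in>K. f k) ^ Suc m = (\<Sum>(k,t)\<in>K \<times> lists_of_len K m. f k * prod_list (map f t))"
    using Suc by (simp add: sum_product sum.cartesian_product)
  also have "\<dots> = (\<Sum>t\<in>lists_of_len K (Suc m). prod_list (map f t))"
    unfolding lists_of_len_Suc by (subst sum.reindex[OF inj]) (auto intro!: sum.cong)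
  finally show ?case .
qed

lemma entrywise_power_of_sum:
  assumes K: "finite K"
  shows "(\<Sum>k\<in>K. w k i * cnj (w k j)) ^ m =
    (\<Sum>t\<in>lists_of_len K m. list_monom w t i * cnj (list_monom w t j))"
proof -
  have "prod_list (map (\<lambda>k. w k i * cnj (w k j)) t) = list_monom w t i * cnj (list_monom w t j)" for t
    by (induction t) (simp_all add: list_monom_def ac_simps)
  then show ?thesis by (simp add: power_sum_eq_sum_lists_of_len[OF K])
qed

lemma entrywise_power_gram_mat:
  assumes K: "finite K"
  shows "entrywise (\<lambda>z. z ^ m) (gram_mat n K w) = gram_mat n (lists_of_len K m) (list_monom w)"
  by (rule eq_matI) (auto simp: entrywise_def entrywise_power_of_sum[OF K])

text \<open>Since \<open>h\<^sub>c(z) = \<Sum>j<N. c\<^sub>j z\<^sup>j\<close>, the matrix \<open>h\<^sub>c[\<Sum>k w\<^sub>k w\<^sub>k\<^sup>*]\<close> is again a Gram matrix, of the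
  vectors \<open>\<surd>c\<^sub>j\<close> times the monomials of degree \<open>j < N\<close> in the \<open>w\<^sub>k\<close>.\<close>

definition hc_index :: "nat \<Rightarrow> 'k set \<Rightarrow> (nat \<times> 'k list) set" where
  "hc_index N K = (SIGMA j:{..<N}. lists_of_len K j)"

definition hc_vecs :: "(nat \<Rightarrow> real) \<Rightarrow> ('k \<Rightarrow> nat \<Rightarrow> complex) \<Rightarrow> nat \<times> 'k list \<Rightarrow> nat \<Rightarrow> complex" where
  "hc_vecs c w jt i = complex_of_real (sqrt (c (fst jt))) * list_monom w (snd jt) i"

lemma finite_hc_index: "finite K \<Longrightarrow> finite (hc_index N K)"
  unfolding hc_index_def by (auto intro: finite_lists_of_len)

lemma entrywise_hc_gram_mat:
  assumes K: "finite K" and c: "\<forall>j<N. c j \<ge> 0"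
  shows "entrywise (hc N c) (gram_mat n K w) = gram_mat n (hc_index N K) (hc_vecs c w)"
proof (rule eq_matI)
  fix i j assume "i < dim_row (gram_mat n (hc_index N K) (hc_vecs c w))"
    "j < dim_col (gram_mat n (hc_index N K) (hc_vecs c w))"
  hence i: "i < n" and j: "j < n" by auto
  have "entrywise (hc N c) (gram_mat n K w) $$ (i,j) =
      (\<Sum>p<N. \<Sum>t\<in>lists_of_len K p. complex_of_real (c p) * (list_monom w t i * cnj (list_monom w t j)))"
    using i j by (simp add: entrywise_def hc_def entrywise_power_of_sum[OF K] sum_distrib_left)
  also have "\<dots> = (\<Sum>p<N. \<Sum>t\<in>lists_of_len K p. hc_vecs c w (p,t) i * cnj (hc_vecs c w (p,t) j))"
  proof (intro sum.cong refl)
    fix p t assume p: "p \<in> {..<N}"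
    have "complex_of_real (c p) = complex_of_real (sqrt (c p)) * complex_of_real (sqrt (c p))"
      using c p by (simp flip: of_real_mult)
    thus "complex_of_real (c p) * (list_monom w t i * cnj (list_monom w t j)) =
        hc_vecs c w (p, t) i * cnj (hc_vecs c w (p, t) j)"
      unfolding hc_vecs_def by (simp add: ac_simps)
  qed
  also have "\<dots> = (\<Sum>jt\<in>hc_index N K. hc_vecs c w jt i * cnj (hc_vecs c w jt j))"
    unfolding hc_index_def using K finite_lists_of_len
    by (subst sum.Sigma) (auto simp: split_def)
  finally show "entrywise (hc N c) (gram_mat n K w) $$ (i,j) =
      gram_mat n (hc_index N K) (hc_vecs c w) $$ (i,j)" using i j by simp
qed (auto simp: entrywise_def)

section \<open>The kernel of \<open>h\<^sub>c[A]\<close> lies in the kernel of \<open>A\<^sup>\<circ>\<^sup>M\<close>\<close>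

inductive poly_span :: "'k set \<Rightarrow> ('k \<Rightarrow> nat \<Rightarrow> complex) \<Rightarrow> nat \<Rightarrow> (nat \<Rightarrow> complex) \<Rightarrow> bool"
  for K w where
  poly_span_monom: "set t \<subseteq> K \<Longrightarrow> length t \<le> j \<Longrightarrow> poly_span K w j (list_monom w t)"
| poly_span_add: "poly_span K w j x \<Longrightarrow> poly_span K w j y \<Longrightarrow> poly_span K w j (\<lambda>i. x i + y i)"
| poly_span_smult: "poly_span K w j x \<Longrightarrow> poly_span K w j (\<lambda>i. a * x i)"

lemma poly_span_mono: "poly_span K w j x \<Longrightarrow> j \<le> j' \<Longrightarrow> poly_span K w j' x"
  by (induction rule: poly_span.induct) (auto intro: poly_span.intros)

lemma poly_span_const: "poly_span K w j (\<lambda>i. a)"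
proof -
  have "poly_span K w j (list_monom w [])" by (rule poly_span_monom) auto
  from poly_span_smult[OF this, of a] show ?thesis by (simp add: list_monom_def)
qed

lemma poly_span_sum:
  "finite S \<Longrightarrow> (\<And>s. s \<in> S \<Longrightarrow> poly_span K w j (x s)) \<Longrightarrow> poly_span K w j (\<lambda>i. \<Sum>s\<in>S. x s i)"
proof (induction S rule: finite_induct)
  case empty
  then show ?case using poly_span_const[of K w j 0] by simp
next
  case (insert s S)
  have "poly_span K w j (\<lambda>i. x s i + (\<Sum>s\<in>S. x s i))"
    by (rule poly_span_add) (use insert in auto)
  then show ?case using insert by simp
qed

lemma poly_span_mult_affine:
  "poly_span K w j x \<Longrightarrow> k \<in> K \<Longrightarrow> poly_span K w (Suc j) (\<lambda>i. (a * w k i + b) * x i)"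
proof (induction rule: poly_span.induct)
  case (poly_span_monom t j)
  have "poly_span K w (Suc j) (\<lambda>i. a * list_monom w (k # t) i + b * list_monom w t i)"
    using poly_span_monom
    by (intro poly_span.poly_span_add poly_span.poly_span_smult poly_span.poly_span_monom) auto
  moreover have "(\<lambda>i. a * list_monom w (k # t) i + b * list_monom w t i) =
      (\<lambda>i. (a * w k i + b) * list_monom w t i)"
    by (auto simp: list_monom_def algebra_simps)
  ultimately show ?case by simp
next
  case (poly_span_add j x y)
  then show ?case
    using poly_span.poly_span_add[of K w "Suc j" "\<lambda>i. (a * w k i + b) * x i"]
    by (simp add: distrib_left)
next
  case (poly_span_smult j x c)
  then show ?case
    using poly_span.poly_span_smult[of K w "Suc j" "\<lambda>i. (a * w k i + b) * x i" c]
    by (simp add: ac_simps)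
qed

lemma poly_span_prod_affine:
  "finite S \<Longrightarrow> (\<And>s. s \<in> S \<Longrightarrow> kk s \<in> K) \<Longrightarrow>
    poly_span K w (card S) (\<lambda>i. \<Prod>s\<in>S. a s * w (kk s) i + b s)"
proof (induction S rule: finite_induct)
  case empty
  then show ?case using poly_span_const[of K w 0 1] by simp
next
  case (insert s S)
  then show ?case using poly_span_mult_affine[of K w "card S" _ "kk s" "a s" "b s"] by simp
qed

lemma poly_span_orthogonal:
  assumes "poly_span K w j x"
    and "\<And>t. set t \<subseteq> K \<Longrightarrow> length t \<le> j \<Longrightarrow> (\<Sum>i<n. cnj (list_monom w t i) * v i) = 0"
  shows "(\<Sum>i<n. cnj (x i) * v i) = 0"
  using assms
  by (induction rule: poly_span.induct)
    (auto simp: distrib_right sum.distrib sum_distrib_left[symmetric] mult.assoc)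

text \<open>Lagrange interpolation on the points \<open>i < n\<close>, where two points are identified when all the
  coordinates \<open>w k\<close> agree on them: the factor \<open>(w k i - w k s) / (w k i0 - w k s)\<close> separates
  \<open>i0\<close> from a point \<open>s\<close> of another class.\<close>

lemma poly_span_lagrange_basis:
  assumes i0: "i0 < n"
  shows "\<exists>L. poly_span K w (n - 1) L \<and>
    (\<forall>i<n. L i = (if \<forall>k\<in>K. w k i = w k i0 then 1 else 0))"
proof -
  define D where "D = {s. s < n \<and> \<not> (\<forall>k\<in>K. w k s = w k i0)}"
  define kk where "kk s = (SOME k. k \<in> K \<and> w k s \<noteq> w k i0)" for s
  define a where "a s = 1 / (w (kk s) i0 - w (kk s) s)" for s
  define b where "b s = - w (kk s) s * a s" for s
  define L where "L i = (\<Prod>s\<in>D. a s * w (kk s) i + b s)" for i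
  have kkD: "kk s \<in> K \<and> w (kk s) s \<noteq> w (kk s) i0" if "s \<in> D" for s
    using someI_ex[of "\<lambda>k. k \<in> K \<and> w k s \<noteq> w k i0"] that unfolding D_def kk_def by auto
  have finD: "finite D" unfolding D_def by auto
  have "poly_span K w (card D) L"
    unfolding L_def by (rule poly_span_prod_affine[OF finD]) (use kkD in auto)
  moreover have "card D \<le> n - 1"
  proof -
    have "D \<subseteq> {..<n} - {i0}" unfolding D_def by auto
    hence "card D \<le> card ({..<n} - {i0})" by (intro card_mono) auto
    thus ?thesis using i0 by simp
  qed
  moreover have "L i = (if \<forall>k\<in>K. w k i = w k i0 then 1 else 0)" if i: "i < n" for i
  proof (cases "\<forall>k\<in>K. w k i = w k i0")
    case True
    have "a s * w (kk s) i + b s = 1" if s: "s \<in> D" for s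
    proof -
      have "a s * w (kk s) i + b s = (w (kk s) i0 - w (kk s) s) * a s"
        unfolding b_def using True kkD[OF s] by (simp add: algebra_simps)
      also have "\<dots> = 1"
      proof -
        have "w (kk s) i0 - w (kk s) s \<noteq> 0" using kkD[OF s] by auto
        thus ?thesis by (simp add: a_def)
      qed
      finally show ?thesis .
    qed
    then show ?thesis using True by (simp add: L_def)
  next
    case False
    hence "i \<in> D" using i unfolding D_def by auto
    moreover have "a i * w (kk i) i + b i = 0" unfolding b_def by simp
    ultimately have "L i = 0" unfolding L_def using finD by (auto intro: prod_zero)
    then show ?thesis using False by simp
  qed
  ultimately show ?thesis by (blast intro: poly_span_mono)
qed

lemma poly_span_interpolation:
  assumes f: "\<And>a b. a < n \<Longrightarrow> b < n \<Longrightarrow> (\<forall>k\<in>K. w k a = w k b) \<Longrightarrow> f a = f b"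
  shows "\<exists>F. poly_span K w (n - 1) F \<and> (\<forall>i<n. F i = f i)"
proof -
  define C where "C i = {i'. i' < n \<and> (\<forall>k\<in>K. w k i' = w k i)}" for i
  obtain L where L: "\<And>i0. i0 < n \<Longrightarrow> poly_span K w (n - 1) (L i0) \<and>
      (\<forall>i<n. L i0 i = (if \<forall>k\<in>K. w k i = w k i0 then 1 else 0))"
    using poly_span_lagrange_basis[of _ n K w] by metis
  define F where "F i = (\<Sum>i0<n. f i0 / of_nat (card (C i0)) * L i0 i)" for i
  have "poly_span K w (n - 1) (\<lambda>i. f i0 / of_nat (card (C i0)) * L i0 i)" if "i0 < n" for i0
    using L[OF that] by (blast intro: poly_span_smult)
  hence "poly_span K w (n - 1) F"
    unfolding F_def by (intro poly_span_sum) auto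
  moreover have "F i = f i" if i: "i < n" for i
  proof -
    have "f i0 / of_nat (card (C i0)) * L i0 i =
        (if i0 \<in> C i then f i / of_nat (card (C i)) else 0)" if i0: "i0 < n" for i0
    proof (cases "i0 \<in> C i")
      case True
      hence "C i0 = C i" and "f i0 = f i" and "L i0 i = 1"
        using f[OF i0 i] L[OF i0] i unfolding C_def by auto
      then show ?thesis using True by simp
    next
      case False
      hence "\<not> (\<forall>k\<in>K. w k i = w k i0)" using i0 unfolding C_def by (auto simp: eq_commute)
      hence "L i0 i = 0" using L[OF i0] i by simp
      then show ?thesis using False by simp
    qed
    hence "F i = (\<Sum>i0<n. if i0 \<in> C i then f i / of_nat (card (C i)) else 0)"
      unfolding F_def by (intro sum.cong) auto
    also have "\<dots> = (\<Sum>i0\<in>C i. f i / of_nat (card (C i)))"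
      by (rule sum.mono_neutral_cong_right) (auto simp: C_def)
    also have "\<dots> = f i"
    proof -
      have "i \<in> C i" "finite (C i)" using i unfolding C_def by auto
      hence "card (C i) \<noteq> 0" by auto
      thus ?thesis by simp
    qed
    finally show ?thesis .
  qed
  ultimately show ?thesis by blast
qed

lemma orthogonal_list_monom_from_low_degree:
  assumes low: "\<And>t. set t \<subseteq> K \<Longrightarrow> length t < n \<Longrightarrow> (\<Sum>i<n. cnj (list_monom w t i) * v i) = 0"
    and t: "set t \<subseteq> K"
  shows "(\<Sum>i<n. cnj (list_monom w t i) * v i) = 0"
proof (cases "n = 0")
  case False
  have "list_monom w t a = list_monom w t b" if "\<forall>k\<in>K. w k a = w k b" for a b
    using t that by (induction t) (auto simp: list_monom_def)
  then obtain F where F: "poly_span K w (n - 1) F" and Ft: "\<forall>i<n. F i = list_monom w t i"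
    using poly_span_interpolation[of n K w "list_monom w t"] by blast
  have "(\<Sum>i<n. cnj (F i) * v i) = 0"
    by (rule poly_span_orthogonal[OF F]) (use low False in auto)
  thus ?thesis using Ft by simp
qed simp

lemma kernel_hc_gram_mat_subset:
  assumes K: "finite K" and cpos: "\<forall>j<N. c j > 0" and nN: "n \<le> N"
    and z: "z \<in> carrier_vec n" and Hz: "gram_mat n (hc_index N K) (hc_vecs c w) *\<^sub>v z = 0\<^sub>v n"
  shows "gram_mat n (lists_of_len K M) (list_monom w) *\<^sub>v z = 0\<^sub>v n"
proof -
  have zero: "\<forall>jt\<in>hc_index N K. (\<Sum>j<n. cnj (hc_vecs c w jt j) * z $ j) = 0"
    using Hz gram_mat_mult_vec_eq_0_iff[OF finite_hc_index[OF K] z] by blast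
  have "(\<Sum>i<n. cnj (list_monom w t i) * z $ i) = 0" if t: "set t \<subseteq> K" "length t < n" for t
  proof -
    have "(length t, t) \<in> hc_index N K" using t nN unfolding hc_index_def lists_of_len_def by auto
    moreover have "c (length t) > 0" using cpos t nN by auto
    moreover have "(\<Sum>j<n. cnj (hc_vecs c w (length t, t) j) * z $ j) =
        complex_of_real (sqrt (c (length t))) * (\<Sum>i<n. cnj (list_monom w t i) * z $ i)"
      by (simp add: hc_vecs_def sum_distrib_left ac_simps)
    ultimately show ?thesis using zero by auto
  qed
  hence "(\<Sum>i<n. cnj (list_monom w t i) * z $ i) = 0" if "set t \<subseteq> K" for t
    using orthogonal_list_monom_from_low_degree[of K n w "\<lambda>i. z $ i"] that by blast
  then show ?thesis
    using gram_mat_mult_vec_eq_0_iff[OF finite_lists_of_len[OF K] z]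
    unfolding lists_of_len_def by blast
qed

section \<open>Moore--Penrose inverse, square roots and spectral radius\<close>

lemma penrose_equations_unique:
  assumes A: "A \<in> carrier_mat n n" and X: "X \<in> carrier_mat n n" and Y: "Y \<in> carrier_mat n n"
    and x1: "A * X * A = A" and x2: "X * A * X = X"
    and x3: "adj (A * X) = A * X" and x4: "adj (X * A) = X * A"
    and y1: "A * Y * A = A" and y2: "Y * A * Y = Y"
    and y3: "adj (A * Y) = A * Y" and y4: "adj (Y * A) = Y * A"
  shows "X = Y"
proof -
  note cs = assoc_mult_mat[of _ n n _ n _ n] mult_carrier_mat[of _ n n _ n] adj_mult[of _ n n _ n]
  have aAY: "adj A = adj A * adj Y * adj A" using arg_cong[OF y1, of adj] A Y by (simp add: cs)
  have aAX: "adj A = adj A * adj X * adj A" using arg_cong[OF x1, of adj] A X by (simp add: cs)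
  have "X = X * (adj X * adj A)" using x2 x3 A X by (simp add: cs)
  also have "\<dots> = X * (adj X * (adj A * adj Y * adj A))" using aAY by simp
  also have "\<dots> = X * adj (A * X) * adj (A * Y)" using A X Y by (simp add: cs)
  also have "\<dots> = X * A * Y" using x2 x3 y3 A X Y by (simp add: cs)
  finally have 1: "X = X * A * Y" .
  have "Y = adj A * adj Y * Y" using y2 y4 A Y by (metis adj_mult)
  also have "\<dots> = adj A * adj X * adj A * adj Y * Y" using aAX by simp
  also have "\<dots> = adj (X * A) * adj (Y * A) * Y" using A X Y by (simp add: cs)
  also have "\<dots> = X * A * Y" using x4 y4 y2 A X Y by (simp add: cs)
  finally show ?thesis using 1 by simp
qed

lemma mp_inverse_eqI:
  assumes A: "A \<in> carrier_mat n n" and X: "X \<in> carrier_mat n n"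
    and "A * X * A = A" "X * A * X = X" "adj (A * X) = A * X" "adj (X * A) = X * A"
  shows "mp_inverse A = X"
  unfolding mp_inverse_def
proof (rule the_equality)
  fix Y assume "Y \<in> carrier_mat (dim_col A) (dim_row A) \<and> A * Y * A = A \<and> Y * A * Y = Y \<and>
    adj (A * Y) = A * Y \<and> adj (Y * A) = Y * A"
  thus "Y = X" using penrose_equations_unique[OF A _ X, of Y] assms by auto
qed (use assms in auto)

lemma mp_inverse_unitary_diag:
  assumes U: "unitary n U"
  shows "mp_inverse (unitary_diag n U d) = unitary_diag n U (\<lambda>i. inverse (d i))"
proof (rule mp_inverse_eqI[OF unitary_diag_carrier[OF U] unitary_diag_carrier[OF U]])
  have "(\<lambda>i. d i * inverse (d i) * d i) = d"
    by (rule ext) (case_tac "d i = 0", auto)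
  moreover have "(\<lambda>i. inverse (d i) * d i * inverse (d i)) = (\<lambda>i. inverse (d i))"
    by (rule ext) (case_tac "d i = 0", auto)
  ultimately show "unitary_diag n U d * unitary_diag n U (\<lambda>i. inverse (d i)) * unitary_diag n U d = unitary_diag n U d"
    and "unitary_diag n U (\<lambda>i. inverse (d i)) * unitary_diag n U d * unitary_diag n U (\<lambda>i. inverse (d i)) =
      unitary_diag n U (\<lambda>i. inverse (d i))"
    by (simp_all add: unitary_diag_mult[OF U])
qed (simp_all add: unitary_diag_mult[OF U] adj_unitary_diag[OF U])

text \<open>For \<open>e > 0\<close> the vector \<open>X y - e y\<close> is an eigenvector of \<open>X\<close> for \<open>-e\<close>, which positivity rules out.\<close>

lemma psd_eigenvector_of_square:
  assumes X: "psd n X" and y: "y \<in> carrier_vec n" and e: "e \<ge> 0"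
    and h: "X *\<^sub>v (X *\<^sub>v y) = complex_of_real (e * e) \<cdot>\<^sub>v y"
  shows "X *\<^sub>v y = complex_of_real e \<cdot>\<^sub>v y"
proof -
  have Xc: "X \<in> carrier_mat n n" using psd_carrier[OF X] .
  have Xy: "X *\<^sub>v y \<in> carrier_vec n" using Xc y by simp
  show ?thesis
  proof (cases "e = 0")
    case True
    have "conjugate (X *\<^sub>v y) \<bullet> (X *\<^sub>v y) = conjugate y \<bullet> (X *\<^sub>v (X *\<^sub>v y))"
      using scalar_prod_mult_adj[OF adj_carrier[OF Xc] y Xy] psd_adj[OF X] by simp
    also have "\<dots> = 0" using h True y by simp
    finally have "X *\<^sub>v y = 0\<^sub>v n" using conjugate_scalar_prod_self_eq_0[OF Xy] by simp
    thus ?thesis using True y by auto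
  next
    case False
    hence ep: "e > 0" using e by simp
    define z where "z = X *\<^sub>v y - complex_of_real e \<cdot>\<^sub>v y"
    have z: "z \<in> carrier_vec n" unfolding z_def using Xy y by simp
    have "X *\<^sub>v z = X *\<^sub>v (X *\<^sub>v y) - complex_of_real e \<cdot>\<^sub>v (X *\<^sub>v y)"
      unfolding z_def using Xc y Xy by (simp add: mult_minus_distrib_mat_vec mult_mat_vec)
    also have "\<dots> = - complex_of_real e \<cdot>\<^sub>v z"
      unfolding h z_def using y Xy Xc by (intro eq_vecI) (auto simp: algebra_simps)
    finally have Xz: "X *\<^sub>v z = - complex_of_real e \<cdot>\<^sub>v z" .
    have "0 \<le> Re (conjugate z \<bullet> (X *\<^sub>v z))" using X z unfolding psd_def by auto
    also have "conjugate z \<bullet> (X *\<^sub>v z) = complex_of_real (- e * (\<Sum>i<n. (cmod (z $ i))^2))"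
      unfolding Xz using z conjugate_scalar_prod_self[OF z] by simp
    finally have "(\<Sum>i<n. (cmod (z $ i))^2) \<le> 0" using ep by (simp add: mult_le_0_iff)
    hence "(\<Sum>i<n. (cmod (z $ i))^2) = 0" by (simp add: antisym sum_nonneg)
    hence "z = 0\<^sub>v n"
      using conjugate_scalar_prod_self_eq_0[OF z] conjugate_scalar_prod_self[OF z] by simp
    thus ?thesis using Xy y Xc unfolding z_def by (auto simp: vec_eq_iff)
  qed
qed

lemma psd_sqrt_unique:
  assumes X: "psd n X" and Y: "psd n Y" and XY: "X * X = Y * Y"
  shows "X = Y"
proof -
  obtain V e where V: "unitary n V" and Yd: "Y = unitary_diag n V e" and e: "\<forall>i<n. e i \<ge> 0"
    using psd_unitary_diagonalization[OF Y] by auto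
  have Vc: "V \<in> carrier_mat n n" using V unitary_carrier by auto
  have Xc: "X \<in> carrier_mat n n" and Yc: "Y \<in> carrier_mat n n" using X Y psd_carrier by auto
  have cols: "col (X * V) k = col (Y * V) k" if k: "k < n" for k
  proof -
    define y where "y = col V k"
    have y: "y \<in> carrier_vec n" using Vc k y_def by simp
    have Yy: "Y *\<^sub>v y = complex_of_real (e k) \<cdot>\<^sub>v y"
      using col_mult2[OF Yc Vc k] unitary_diag_mult_unitary[OF V] col_mult_real_diag_mat[OF Vc k]
      unfolding Yd y_def by simp
    have "X *\<^sub>v (X *\<^sub>v y) = Y *\<^sub>v (Y *\<^sub>v y)"
      using assoc_mult_mat_vec[OF Xc Xc y] assoc_mult_mat_vec[OF Yc Yc y] XY by simp
    also have "\<dots> = complex_of_real (e k * e k) \<cdot>\<^sub>v y"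
      by (simp add: Yy mult_mat_vec[OF Yc y] smult_smult_assoc)
    finally have "X *\<^sub>v y = complex_of_real (e k) \<cdot>\<^sub>v y"
      by (rule psd_eigenvector_of_square[OF X y e[rule_format, OF k]])
    thus ?thesis using col_mult2[OF Xc Vc k] col_mult2[OF Yc Vc k] Yy unfolding y_def by simp
  qed
  have "X * V = Y * V" by (rule mat_col_eqI) (use cols Xc Yc Vc in simp_all)
  hence "X * V * adj V = Y * V * adj V" by simp
  thus ?thesis using Xc Yc Vc V unfolding unitary_def by (simp add: assoc_mult_mat[of _ n n _ n _ n])
qed

lemma psd_sqrt_eqI:
  assumes X: "psd n X" and A: "A \<in> carrier_mat n n" and XX: "X * X = A"
  shows "psd_sqrt A = X"
  unfolding psd_sqrt_def
proof (rule the_equality)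
  fix Y assume "psd (dim_row A) Y \<and> Y * Y = A"
  thus "Y = X" using psd_sqrt_unique[OF _ X, of Y] A XX by auto
qed (use assms in auto)

lemma mp_half_unitary_diag:
  assumes U: "unitary n U" and d: "\<forall>i<n. d i \<ge> 0"
  shows "mp_half (unitary_diag n U d) = unitary_diag n U (\<lambda>i. sqrt (inverse (d i)))"
proof -
  have "unitary_diag n U (\<lambda>i. sqrt (inverse (d i))) * unitary_diag n U (\<lambda>i. sqrt (inverse (d i))) =
      unitary_diag n U (\<lambda>i. inverse (d i))"
    unfolding unitary_diag_mult[OF U] by (rule unitary_diag_cong) (use d in auto)
  moreover have "psd n (unitary_diag n U (\<lambda>i. sqrt (inverse (d i))))"
    by (rule psd_unitary_diag[OF U]) (use d in auto)
  ultimately show ?thesis unfolding mp_half_def mp_inverse_unitary_diag[OF U]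
    by (intro psd_sqrt_eqI) (auto simp: U)
qed

lemma mp_half_psd:
  assumes H: "psd n H"
  shows "mp_half H \<in> carrier_mat n n" "adj (mp_half H) = mp_half H"
    "mp_half H * mp_half H = mp_inverse H"
proof -
  obtain U d where U: "unitary n U" and Hd: "H = unitary_diag n U d" and d: "\<forall>i<n. d i \<ge> 0"
    using psd_unitary_diagonalization[OF H] by auto
  have S: "mp_half H = unitary_diag n U (\<lambda>i. sqrt (inverse (d i)))"
    unfolding Hd by (rule mp_half_unitary_diag[OF U d])
  show "mp_half H \<in> carrier_mat n n" unfolding S using U by simp
  show "adj (mp_half H) = mp_half H" unfolding S by (rule adj_unitary_diag[OF U])
  have "mp_half H * mp_half H = unitary_diag n U (\<lambda>i. inverse (d i))"
    unfolding S unitary_diag_mult[OF U] by (rule unitary_diag_cong) (use d in auto)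
  also have "\<dots> = mp_inverse H" unfolding Hd by (rule mp_inverse_unitary_diag[OF U, symmetric])
  finally show "mp_half H * mp_half H = mp_inverse H" .
qed

lemma eigenvector_unitary_diag_col:
  assumes V: "unitary n V" and i: "i < n"
  shows "eigenvector (unitary_diag n V l) (col V i) (complex_of_real (l i))"
proof -
  have Vc: "V \<in> carrier_mat n n" using V unitary_carrier by auto
  have "col V i \<noteq> 0\<^sub>v n"
  proof
    assume "col V i = 0\<^sub>v n"
    hence "adj V *\<^sub>v col V i = 0\<^sub>v n" using Vc by (intro eq_vecI) auto
    hence "unit_vec n i $ i = (0\<^sub>v n :: complex vec) $ i" using unitary_adj_mult_col[OF V i] by simp
    thus False using i by simp
  qed
  moreover have "unitary_diag n V l *\<^sub>v col V i = complex_of_real (l i) \<cdot>\<^sub>v col V i"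
    using col_mult2[OF unitary_diag_carrier[OF V] Vc i] unitary_diag_mult_unitary[OF V]
      col_mult_real_diag_mat[OF Vc i] by simp
  ultimately show ?thesis using Vc i unitary_diag_carrier[OF V, of l] unfolding eigenvector_def by auto
qed

lemma spectrum_unitary_diag:
  assumes V: "unitary n V" and k: "k \<in> spectrum (unitary_diag n V l)"
  shows "\<exists>i<n. k = complex_of_real (l i)"
proof -
  have Vc: "V \<in> carrier_mat n n" using V unitary_carrier by auto
  obtain v where v: "v \<in> carrier_vec n" and v0: "v \<noteq> 0\<^sub>v n" and Kv: "unitary_diag n V l *\<^sub>v v = k \<cdot>\<^sub>v v"
    using k unitary_diag_carrier[OF V, of l] unfolding spectrum_def eigenvalue_def eigenvector_def by auto
  define y where "y = adj V *\<^sub>v v"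
  have y: "y \<in> carrier_vec n" unfolding y_def using mult_mat_vec_carrier[OF adj_carrier[OF Vc] v] .
  have Vy: "V *\<^sub>v y = v" unfolding y_def using V Vc v unfolding unitary_def
    by (simp add: assoc_mult_mat_vec[symmetric, of _ n n _ n])
  have Dyc: "real_diag_mat n l *\<^sub>v y \<in> carrier_vec n" using mult_mat_vec_carrier[OF real_diag_mat_carrier y] .
  have "unitary_diag n V l *\<^sub>v v = V *\<^sub>v (real_diag_mat n l *\<^sub>v y)"
    unfolding unitary_diag_def y_def using Vc v
    by (simp add: assoc_mult_mat_vec[of _ n n _ n] mult_carrier_mat[of _ n n _ n]
        mult_mat_vec_carrier[OF adj_carrier[OF Vc] v])
  hence "adj V *\<^sub>v (unitary_diag n V l *\<^sub>v v) = (adj V * V) *\<^sub>v (real_diag_mat n l *\<^sub>v y)"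
    using assoc_mult_mat_vec[OF adj_carrier[OF Vc] Vc Dyc] by simp
  hence "real_diag_mat n l *\<^sub>v y = adj V *\<^sub>v (unitary_diag n V l *\<^sub>v v)"
    using V Dyc unfolding unitary_def by simp
  also have "\<dots> = k \<cdot>\<^sub>v y" unfolding Kv y_def using mult_mat_vec[OF adj_carrier[OF Vc] v] .
  finally have Dy: "real_diag_mat n l *\<^sub>v y = k \<cdot>\<^sub>v y" .
  have "y \<noteq> 0\<^sub>v n" using Vy v0 Vc by auto
  then obtain i where i: "i < n" and yi: "y $ i \<noteq> 0" using y by (auto simp: vec_eq_iff)
  have "complex_of_real (l i) * y $ i = k * y $ i"
    using real_diag_mat_mult_vec_index[OF y i, of l] Dy i y by auto
  thus ?thesis using i yi by auto
qed

lemma spectral_radius_unitary_diag: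
  assumes V: "unitary n V" and n: "n > 0" and l: "\<forall>i<n. l i \<ge> 0"
  shows "\<exists>i0<n. spectral_radius (unitary_diag n V l) = l i0"
    and "\<And>i. i < n \<Longrightarrow> l i \<le> spectral_radius (unitary_diag n V l)"
proof -
  note sr = spectral_radius_mem_max[OF unitary_diag_carrier[OF V, of l] n]
  from sr(1) obtain k where k: "k \<in> spectrum (unitary_diag n V l)"
    and kr: "spectral_radius (unitary_diag n V l) = norm k" by auto
  from spectrum_unitary_diag[OF V k] obtain i where "i < n" and "k = complex_of_real (l i)" by auto
  then show "\<exists>i0<n. spectral_radius (unitary_diag n V l) = l i0" using kr l by auto
  fix i assume i: "i < n"
  have "complex_of_real (l i) \<in> spectrum (unitary_diag n V l)"
    using eigenvector_unitary_diag_col[OF V i] unfolding spectrum_def eigenvalue_def by blast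
  hence "norm (complex_of_real (l i)) \<le> spectral_radius (unitary_diag n V l)"
    using sr(2) by blast
  thus "l i \<le> spectral_radius (unitary_diag n V l)" using l i by simp
qed

section \<open>The critical constant of a pair of positive semidefinite matrices\<close>

lemma quad_form_le_spectral_radius:
  assumes K: "psd n K" and n: "n > 0" and w: "w \<in> carrier_vec n"
  shows "Re (conjugate w \<bullet> (K *\<^sub>v w)) \<le> spectral_radius K * (\<Sum>i<n. (cmod (w $ i))^2)"
proof -
  obtain V l where V: "unitary n V" and Kl: "K = unitary_diag n V l" and l: "\<forall>i<n. l i \<ge> 0"
    using psd_unitary_diagonalization[OF K] by auto
  have "Re (conjugate w \<bullet> (K *\<^sub>v w)) = (\<Sum>i<n. l i * (cmod ((adj V *\<^sub>v w) $ i))^2)"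
    unfolding Kl quad_form_unitary_diag[OF V w] by (simp add: Re_sum)
  also have "\<dots> \<le> (\<Sum>i<n. spectral_radius K * (cmod ((adj V *\<^sub>v w) $ i))^2)"
    using spectral_radius_unitary_diag(2)[OF V n l] unfolding Kl
    by (intro sum_mono mult_right_mono) auto
  also have "\<dots> = spectral_radius K * (\<Sum>i<n. (cmod (w $ i))^2)"
    by (simp only: sum_distrib_left[symmetric] unitary_adj_preserves_norm[OF V w])
  finally show ?thesis .
qed

lemma spectral_radius_attained:
  assumes K: "psd n K" and n: "n > 0"
  shows "\<exists>x \<in> carrier_vec n. (\<Sum>i<n. (cmod (x $ i))^2) = 1 \<and>
    Re (conjugate x \<bullet> (K *\<^sub>v x)) = spectral_radius K"
proof -
  obtain V l where V: "unitary n V" and Kl: "K = unitary_diag n V l" and l: "\<forall>i<n. l i \<ge> 0"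
    using psd_unitary_diagonalization[OF K] by auto
  obtain i0 where i0: "i0 < n" and \<rho>: "spectral_radius K = l i0"
    using spectral_radius_unitary_diag(1)[OF V n l] Kl by auto
  define x where "x = col V i0"
  have x: "x \<in> carrier_vec n" using unitary_carrier[OF V] i0 x_def by simp
  have Vx: "adj V *\<^sub>v x = unit_vec n i0" unfolding x_def by (rule unitary_adj_mult_col[OF V i0])
  have unit: "(\<Sum>i<n. f i * (cmod (unit_vec n i0 $ i))^2) = f i0" for f :: "nat \<Rightarrow> real"
  proof -
    have "(\<Sum>i<n. f i * (cmod (unit_vec n i0 $ i))^2) = (\<Sum>i\<in>{i0}. f i * (cmod (unit_vec n i0 $ i))^2)"
      by (rule sum.mono_neutral_right) (use i0 in auto)
    thus ?thesis using i0 by simp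
  qed
  have "(\<Sum>i<n. (cmod (x $ i))^2) = 1"
    using unitary_adj_preserves_norm[OF V x] unit[of "\<lambda>_. 1"] Vx by simp
  moreover have "Re (conjugate x \<bullet> (K *\<^sub>v x)) = l i0"
    unfolding Kl quad_form_unitary_diag[OF V x] Vx using unit[of l] by (simp add: Re_sum)
  ultimately show ?thesis using x \<rho> by auto
qed

text \<open>With \<open>H = U diag(d) U\<^sup>*\<close> and \<open>R = U diag(\<surd>d) U\<^sup>*\<close>, the product \<open>H\<^sup>\<dagger>\<^sup>/\<^sup>2 R\<close> is the orthogonal
  projection onto the range of \<open>H\<close>; so every \<open>v\<close> is \<open>H\<^sup>\<dagger>\<^sup>/\<^sup>2 (R v)\<close> up to a kernel vector of \<open>H\<close>.\<close>

lemma mp_half_range_decomp: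
  assumes H: "psd n H" and v: "v \<in> carrier_vec n"
  shows "\<exists>w \<in> carrier_vec n. H *\<^sub>v (v - mp_half H *\<^sub>v w) = 0\<^sub>v n \<and>
    (\<Sum>i<n. (cmod (w $ i))^2) = Re (conjugate v \<bullet> (H *\<^sub>v v))"
proof -
  obtain U d where U: "unitary n U" and Hd: "H = unitary_diag n U d" and d: "\<forall>i<n. d i \<ge> 0"
    using psd_unitary_diagonalization[OF H] by auto
  define R where "R = unitary_diag n U (\<lambda>i. sqrt (d i))"
  define Pi where "Pi = unitary_diag n U (\<lambda>i. d i * inverse (d i))"
  have Rc: "R \<in> carrier_mat n n" and Pic: "Pi \<in> carrier_mat n n" and Hc: "H \<in> carrier_mat n n"
    unfolding R_def Pi_def Hd using U by auto
  have SR: "mp_half H * R = Pi"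
    unfolding Hd mp_half_unitary_diag[OF U d] R_def Pi_def unitary_diag_mult[OF U]
    by (rule unitary_diag_cong) (case_tac "d i = 0", auto simp: real_sqrt_mult[symmetric])
  have HPi: "H * Pi = H"
    unfolding Hd Pi_def unitary_diag_mult[OF U] by (rule unitary_diag_cong) (case_tac "d i = 0", auto)
  have RR: "R * R = H"
    unfolding Hd R_def unitary_diag_mult[OF U] by (rule unitary_diag_cong) (use d in auto)
  define w where "w = R *\<^sub>v v"
  have w: "w \<in> carrier_vec n" unfolding w_def using Rc v by simp
  have Sw: "mp_half H *\<^sub>v w = Pi *\<^sub>v v"
    unfolding w_def SR[symmetric] using assoc_mult_mat_vec[OF mp_half_psd(1)[OF H] Rc v] by simp
  have "H *\<^sub>v (v - mp_half H *\<^sub>v w) = H *\<^sub>v v - (H * Pi) *\<^sub>v v"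
    unfolding Sw using mult_minus_distrib_mat_vec[OF Hc v, of "Pi *\<^sub>v v"] Pic v
      assoc_mult_mat_vec[OF Hc Pic v] by simp
  also have "\<dots> = 0\<^sub>v n" unfolding HPi using Hc v by simp
  finally have "H *\<^sub>v (v - mp_half H *\<^sub>v w) = 0\<^sub>v n" .
  moreover have "conjugate w \<bullet> w = conjugate v \<bullet> (H *\<^sub>v v)"
    unfolding w_def RR[symmetric]
    using scalar_prod_mult_adj[OF adj_carrier[OF Rc] v, of "R *\<^sub>v v"] adj_unitary_diag[OF U]
      assoc_mult_mat_vec[OF Rc Rc v] Rc v by (simp add: R_def)
  hence "(\<Sum>i<n. (cmod (w $ i))^2) = Re (conjugate v \<bullet> (H *\<^sub>v v))"
    using conjugate_scalar_prod_self[OF w] by (metis Re_complex_of_real)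
  ultimately show ?thesis using w by blast
qed

lemma quad_form_mp_half_le:
  assumes H: "psd n H" and x: "x \<in> carrier_vec n"
  shows "Re (conjugate (mp_half H *\<^sub>v x) \<bullet> (H *\<^sub>v (mp_half H *\<^sub>v x))) \<le> (\<Sum>i<n. (cmod (x $ i))^2)"
proof -
  obtain U d where U: "unitary n U" and Hd: "H = unitary_diag n U d" and d: "\<forall>i<n. d i \<ge> 0"
    using psd_unitary_diagonalization[OF H] by auto
  define q where "q i = sqrt (inverse (d i)) * d i * sqrt (inverse (d i))" for i
  have q: "q i \<le> 1" for i
    unfolding q_def by (cases "d i = 0") (auto simp: real_sqrt_inverse field_simps)
  have SHS: "mp_half H * H * mp_half H = unitary_diag n U q"
    unfolding Hd mp_half_unitary_diag[OF U d] q_def unitary_diag_mult[OF U] ..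
  have "conjugate (mp_half H *\<^sub>v x) \<bullet> (H *\<^sub>v (mp_half H *\<^sub>v x)) =
      conjugate x \<bullet> (unitary_diag n U q *\<^sub>v x)"
    using psd_congruence(2)[OF H mp_half_psd(1,2)[OF H] x] unfolding SHS by simp
  also have "\<dots> = (\<Sum>i<n. complex_of_real (q i * (cmod ((adj U *\<^sub>v x) $ i))^2))"
    by (rule quad_form_unitary_diag[OF U x])
  finally have "Re (conjugate (mp_half H *\<^sub>v x) \<bullet> (H *\<^sub>v (mp_half H *\<^sub>v x))) =
      (\<Sum>i<n. q i * (cmod ((adj U *\<^sub>v x) $ i))^2)"
    by (simp add: Re_sum)
  also have "\<dots> \<le> (\<Sum>i<n. 1 * (cmod ((adj U *\<^sub>v x) $ i))^2)"
    by (intro sum_mono mult_right_mono q) simp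
  also have "\<dots> = (\<Sum>i<n. (cmod (x $ i))^2)" using unitary_adj_preserves_norm[OF U x] by simp
  finally show ?thesis .
qed

text \<open>Writing \<open>v = H\<^sup>\<dagger>\<^sup>/\<^sup>2 w + z\<close> with \<open>H z = 0\<close>, hence \<open>P z = 0\<close>, gives
  \<open>v\<^sup>* P v = w\<^sup>* (H\<^sup>\<dagger>\<^sup>/\<^sup>2 P H\<^sup>\<dagger>\<^sup>/\<^sup>2) w \<le> \<rho> |w|\<^sup>2 = \<rho> v\<^sup>* H v\<close>.\<close>

lemma loewner_le_of_spectral_radius_le:
  assumes H: "psd n H" and P: "psd n P" and n: "n > 0"
    and ker: "\<And>z. z \<in> carrier_vec n \<Longrightarrow> H *\<^sub>v z = 0\<^sub>v n \<Longrightarrow> P *\<^sub>v z = 0\<^sub>v n"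
    and C: "spectral_radius (mp_half H * P * mp_half H) \<le> C"
  shows "loewner_le n P (complex_of_real C \<cdot>\<^sub>m H)"
  unfolding loewner_le_smult_iff[OF H P]
proof
  fix v :: "complex vec" assume v: "v \<in> carrier_vec n"
  define S where "S = mp_half H"
  note S = mp_half_psd[OF H, folded S_def]
  define \<rho> where "\<rho> = spectral_radius (S * P * S)"
  have Pc: "P \<in> carrier_mat n n" using P psd_carrier by auto
  obtain w where w: "w \<in> carrier_vec n" and Hz: "H *\<^sub>v (v - S *\<^sub>v w) = 0\<^sub>v n"
    and wH: "(\<Sum>i<n. (cmod (w $ i))^2) = Re (conjugate v \<bullet> (H *\<^sub>v v))"
    using mp_half_range_decomp[OF H v] unfolding S_def by blast
  have Sw: "S *\<^sub>v w \<in> carrier_vec n" using S(1) w by simp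
  have "v = S *\<^sub>v w + (v - S *\<^sub>v w)" using v Sw S(1) by (intro eq_vecI) auto
  hence "conjugate v \<bullet> (P *\<^sub>v v) = conjugate (S *\<^sub>v w) \<bullet> (P *\<^sub>v (S *\<^sub>v w))"
    using quad_form_add_kernel[OF Pc psd_adj[OF P] Sw _ ker[OF _ Hz]] v Sw by (metis minus_carrier_vec)
  also have "\<dots> = conjugate w \<bullet> ((S * P * S) *\<^sub>v w)"
    using psd_congruence(2)[OF P S(1,2) w] by simp
  finally have "Re (conjugate v \<bullet> (P *\<^sub>v v)) \<le> \<rho> * Re (conjugate v \<bullet> (H *\<^sub>v v))"
    using quad_form_le_spectral_radius[OF psd_congruence(1)[OF P S(1,2)] n w] wH
    unfolding \<rho>_def by simp
  also have "\<dots> \<le> C * Re (conjugate v \<bullet> (H *\<^sub>v v))"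
    using C H v unfolding \<rho>_def S_def psd_def by (intro mult_right_mono) auto
  finally show "Re (conjugate v \<bullet> (P *\<^sub>v v)) \<le> C * Re (conjugate v \<bullet> (H *\<^sub>v v))" .
qed

lemma spectral_radius_le_of_loewner_le:
  assumes H: "psd n H" and P: "psd n P"
    and v0: "v0 \<in> carrier_vec n" "Re (conjugate v0 \<bullet> (H *\<^sub>v v0)) > 0"
    and le: "loewner_le n P (complex_of_real C \<cdot>\<^sub>m H)"
  shows "spectral_radius (mp_half H * P * mp_half H) \<le> C"
proof -
  define S where "S = mp_half H"
  note S = mp_half_psd[OF H, folded S_def]
  have le': "Re (conjugate v \<bullet> (P *\<^sub>v v)) \<le> C * Re (conjugate v \<bullet> (H *\<^sub>v v))"
    if "v \<in> carrier_vec n" for v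
    using le that unfolding loewner_le_smult_iff[OF H P] by blast
  have "0 \<le> Re (conjugate v0 \<bullet> (P *\<^sub>v v0))" using P v0 unfolding psd_def by auto
  hence "0 \<le> C * Re (conjugate v0 \<bullet> (H *\<^sub>v v0))" using le'[OF v0(1)] by linarith
  hence C0: "C \<ge> 0" using v0(2) by (simp add: zero_le_mult_iff)
  have "n > 0" using v0 psd_carrier[OF H] by (cases n) (auto simp: scalar_prod_def)
  then obtain x where x: "x \<in> carrier_vec n" and x1: "(\<Sum>i<n. (cmod (x $ i))^2) = 1"
    and \<rho>: "Re (conjugate x \<bullet> ((S * P * S) *\<^sub>v x)) = spectral_radius (S * P * S)"
    using spectral_radius_attained[OF psd_congruence(1)[OF P S(1,2)]] by blast
  have Sx: "S *\<^sub>v x \<in> carrier_vec n" using S(1) x by simp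
  have "spectral_radius (S * P * S) = Re (conjugate (S *\<^sub>v x) \<bullet> (P *\<^sub>v (S *\<^sub>v x)))"
    using \<rho> psd_congruence(2)[OF P S(1,2) x] by simp
  also have "\<dots> \<le> C * Re (conjugate (S *\<^sub>v x) \<bullet> (H *\<^sub>v (S *\<^sub>v x)))" by (rule le'[OF Sx])
  also have "\<dots> \<le> C * 1"
    using quad_form_mp_half_le[OF H x] x1 C0 unfolding S_def by (intro mult_left_mono) auto
  finally show ?thesis unfolding S_def by simp
qed

lemma hc_gram_mat_unit_vec_pos:
  assumes K: "finite K" and N1: "N \<ge> 1" and c0: "c 0 > 0" and n: "n > 0"
  shows "Re (conjugate (unit_vec n 0) \<bullet> (gram_mat n (hc_index N K) (hc_vecs c w) *\<^sub>v unit_vec n 0)) > 0"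
proof -
  let ?f = "\<lambda>jt. (cmod (\<Sum>j<n. cnj (hc_vecs c w jt j) * unit_vec n 0 $ j))^2"
  have "(\<Sum>j<n. cnj (hc_vecs c w (0, []) j) * unit_vec n 0 $ j) =
      (\<Sum>j\<in>{0}. cnj (hc_vecs c w (0, []) j) * unit_vec n 0 $ j)"
    by (rule sum.mono_neutral_right) (use n in auto)
  hence "?f (0, []) = c 0" using n c0 by (simp add: hc_vecs_def list_monom_def)
  moreover have "?f (0, []) \<le> (\<Sum>jt\<in>hc_index N K. ?f jt)"
    using N1 finite_hc_index[OF K] by (intro member_le_sum) (auto simp: hc_index_def lists_of_len_def)
  ultimately show ?thesis using c0 by (simp add: quad_form_gram_mat)
qed

lemma crit_set_hc_power:
  assumes N1: "N \<ge> 1" and cpos: "\<forall>j<N. c j > 0" and A: "psd N A"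
  shows "crit_set N (hc N c) (\<lambda>z. z ^ M) A =
    {spectral_radius (mp_half (entrywise (hc N c) A) * entrywise (\<lambda>z. z ^ M) A *
      mp_half (entrywise (hc N c) A))..}"
proof -
  obtain w where Aw: "A = gram_mat N {..<N} w" using psd_eq_gram_mat[OF A] by auto
  define H where "H = entrywise (hc N c) A"
  define P where "P = entrywise (\<lambda>z. z ^ M) A"
  have Hg: "H = gram_mat N (hc_index N {..<N}) (hc_vecs c w)"
    unfolding H_def Aw using cpos by (intro entrywise_hc_gram_mat) auto
  have Pg: "P = gram_mat N (lists_of_len {..<N} M) (list_monom w)"
    unfolding P_def Aw by (rule entrywise_power_gram_mat) simp
  have H: "psd N H" and P: "psd N P" unfolding Hg Pg by (rule psd_gram_mat)+
  have ker: "P *\<^sub>v z = 0\<^sub>v N" if "z \<in> carrier_vec N" "H *\<^sub>v z = 0\<^sub>v N" for z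
    using kernel_hc_gram_mat_subset[of "{..<N}" N c N z w M] cpos that unfolding Hg Pg by simp
  have pos: "Re (conjugate (unit_vec N 0) \<bullet> (H *\<^sub>v unit_vec N 0)) > 0"
    unfolding Hg using N1 cpos by (intro hc_gram_mat_unit_vec_pos) auto
  have "loewner_le N P (complex_of_real C \<cdot>\<^sub>m H) \<longleftrightarrow> spectral_radius (mp_half H * P * mp_half H) \<le> C"
    for C
  proof
    assume "loewner_le N P (complex_of_real C \<cdot>\<^sub>m H)"
    then show "spectral_radius (mp_half H * P * mp_half H) \<le> C"
      by (rule spectral_radius_le_of_loewner_le[OF H P unit_vec_carrier pos])
  next
    assume "spectral_radius (mp_half H * P * mp_half H) \<le> C"
    then show "loewner_le N P (complex_of_real C \<cdot>\<^sub>m H)"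
      using N1 by (intro loewner_le_of_spectral_radius_le[OF H P _ ker]) simp_all
  qed
  then show ?thesis unfolding crit_set_def H_def[symmetric] P_def[symmetric] by auto
qed

lemma crit_const_hc_power:
  assumes N1: "N \<ge> 1" and cpos: "\<forall>j<N. c j > 0" and A: "psd N A"
  shows "crit_const N (hc N c) (\<lambda>z. z ^ M) A =
      spectral_radius (mp_half (entrywise (hc N c) A) * entrywise (\<lambda>z. z ^ M) A *
        mp_half (entrywise (hc N c) A))"
    and "crit_const N (hc N c) (\<lambda>z. z ^ M) A \<in> crit_set N (hc N c) (\<lambda>z. z ^ M) A"
    and "\<And>C. C \<in> crit_set N (hc N c) (\<lambda>z. z ^ M) A \<Longrightarrow> crit_const N (hc N c) (\<lambda>z. z ^ M) A \<le> C"
  using crit_set_hc_power[OF N1 cpos A, of M] by (simp_all add: crit_const_def)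

section \<open>The rank-one case\<close>

lemma outer_carrier[simp]: "u \<in> carrier_vec n \<Longrightarrow> outer u \<in> carrier_mat n n"
  by (simp add: outer_def)

lemma outer_index: "u \<in> carrier_vec n \<Longrightarrow> i < n \<Longrightarrow> j < n \<Longrightarrow> outer u $$ (i,j) = u $ i * cnj (u $ j)"
  by (simp add: outer_def)

lemma outer_eq_gram_mat: "u \<in> carrier_vec n \<Longrightarrow> outer u = gram_mat n {()} (\<lambda>_ i. u $ i)"
  by (rule eq_matI) (auto simp: outer_def)

lemma psd_outer: "u \<in> carrier_vec n \<Longrightarrow> psd n (outer u)"
  using outer_eq_gram_mat psd_gram_mat by metis

lemma entrywise_power_outer:
  assumes u: "u \<in> carrier_vec n"
  shows "entrywise (\<lambda>z. z ^ M) (outer u) = outer (vpow u M)"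
  by (rule eq_matI) (use u in \<open>auto simp: outer_def entrywise_def vpow_def power_mult_distrib\<close>)

lemma outer_mult_vec:
  assumes y: "y \<in> carrier_vec n" and z: "z \<in> carrier_vec n"
  shows "outer y *\<^sub>v z = (conjugate y \<bullet> z) \<cdot>\<^sub>v y"
proof (rule eq_vecI)
  fix i assume "i < dim_vec ((conjugate y \<bullet> z) \<cdot>\<^sub>v y)"
  hence i: "i < n" using y by simp
  have "(outer y *\<^sub>v z) $ i = (\<Sum>j<n. y $ i * cnj (y $ j) * z $ j)"
    using index_mult_mat_vec_sum[OF outer_carrier[OF y] z i] outer_index[OF y i] by simp
  also have "\<dots> = (conjugate y \<bullet> z) * y $ i"
    using y z by (simp add: scalar_prod_def atLeast0LessThan sum_distrib_left sum_distrib_right ac_simps)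
  finally show "(outer y *\<^sub>v z) $ i = ((conjugate y \<bullet> z) \<cdot>\<^sub>v y) $ i" using i y by simp
qed (use y in \<open>auto simp: outer_def\<close>)

lemma congruence_outer:
  assumes S: "S \<in> carrier_mat n n" and hS: "adj S = S" and x: "x \<in> carrier_vec n"
  shows "S * outer x * S = outer (S *\<^sub>v x)"
proof (rule eq_matI)
  fix i j assume "i < dim_row (outer (S *\<^sub>v x))" "j < dim_col (outer (S *\<^sub>v x))"
  hence i: "i < n" and j: "j < n" using S by (auto simp: outer_def)
  have SO: "(S * outer x) $$ (i,l) = (S *\<^sub>v x) $ i * cnj (x $ l)" if l: "l < n" for l
  proof -
    have "(S * outer x) $$ (i,l) = (\<Sum>k<n. S $$ (i,k) * (x $ k * cnj (x $ l)))"
      using index_mult_mat_sum[OF S outer_carrier[OF x] i l] outer_index[OF x _ l] by simp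
    also have "\<dots> = (S *\<^sub>v x) $ i * cnj (x $ l)"
      using index_mult_mat_vec_sum[OF S x i]
      by (simp add: sum_distrib_right sum_distrib_left mult.left_commute mult.commute)
    finally show ?thesis .
  qed
  have Sji: "S $$ (l,j) = cnj (S $$ (j,l))" if l: "l < n" for l
    using hS S l j by (metis adj_index carrier_matD(1,2))
  have "(S * outer x * S) $$ (i,j) = (\<Sum>l<n. (S * outer x) $$ (i,l) * S $$ (l,j))"
    by (rule index_mult_mat_sum[OF mult_carrier_mat[OF S outer_carrier[OF x]] S i j])
  also have "\<dots> = (\<Sum>l<n. (S *\<^sub>v x) $ i * (cnj (x $ l) * cnj (S $$ (j,l))))"
    using SO Sji by (auto simp: ac_simps intro!: sum.cong)
  also have "\<dots> = (S *\<^sub>v x) $ i * cnj ((S *\<^sub>v x) $ j)"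
    using index_mult_mat_vec_sum[OF S x j] by (simp add: sum_distrib_left cnj_sum ac_simps)
  also have "\<dots> = outer (S *\<^sub>v x) $$ (i,j)" using outer_index[OF _ i j, of "S *\<^sub>v x"] S x by simp
  finally show "(S * outer x * S) $$ (i,j) = outer (S *\<^sub>v x) $$ (i,j)" .
qed (use S x in \<open>auto simp: outer_def\<close>)

lemma spectrum_outer:
  assumes y: "y \<in> carrier_vec n" and k: "k \<in> spectrum (outer y)"
  shows "k = 0 \<or> k = conjugate y \<bullet> y"
proof (cases "k = 0")
  case False
  obtain z where z: "z \<in> carrier_vec n" and z0: "z \<noteq> 0\<^sub>v n" and Oz: "outer y *\<^sub>v z = k \<cdot>\<^sub>v z"
    using k outer_carrier[OF y] unfolding spectrum_def eigenvalue_def eigenvector_def by auto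
  have eq: "(conjugate y \<bullet> z) \<cdot>\<^sub>v y = k \<cdot>\<^sub>v z" using Oz outer_mult_vec[OF y z] by simp
  have "conjugate y \<bullet> z \<noteq> 0"
  proof
    assume "conjugate y \<bullet> z = 0"
    hence "k \<cdot>\<^sub>v z = 0\<^sub>v n" using eq y by (auto simp: vec_eq_iff)
    hence "z = 0\<^sub>v n" using False z by (auto simp: vec_eq_iff)
    thus False using z0 by simp
  qed
  moreover have "(conjugate y \<bullet> z) * (conjugate y \<bullet> y) = k * (conjugate y \<bullet> z)"
    using arg_cong[OF eq, of "\<lambda>v. conjugate y \<bullet> v"] y z by simp
  ultimately show ?thesis by simp
qed simp

lemma spectral_radius_outer:
  assumes y: "y \<in> carrier_vec n" and n: "n > 0"
  shows "spectral_radius (outer y) = (\<Sum>i<n. (cmod (y $ i))^2)"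
proof -
  define \<sigma> where "\<sigma> = (\<Sum>i<n. (cmod (y $ i))^2)"
  have yy: "conjugate y \<bullet> y = complex_of_real \<sigma>" unfolding \<sigma>_def by (rule conjugate_scalar_prod_self[OF y])
  have \<sigma>0: "\<sigma> \<ge> 0" unfolding \<sigma>_def by (simp add: sum_nonneg)
  note sr = spectral_radius_mem_max[OF outer_carrier[OF y] n]
  obtain k where k: "k \<in> spectrum (outer y)" and kr: "spectral_radius (outer y) = norm k"
    using sr(1) by auto
  show ?thesis unfolding \<sigma>_def[symmetric]
  proof (cases "\<sigma> = 0")
    case True
    then show "spectral_radius (outer y) = \<sigma>" using spectrum_outer[OF y k] kr yy by auto
  next
    case False
    hence "y \<noteq> 0\<^sub>v n" using yy y by auto
    moreover have "outer y *\<^sub>v y = complex_of_real \<sigma> \<cdot>\<^sub>v y" using outer_mult_vec[OF y y] yy by simp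
    ultimately have "complex_of_real \<sigma> \<in> spectrum (outer y)"
      using y unfolding spectrum_def eigenvalue_def eigenvector_def by (auto simp: outer_def)
    hence "\<sigma> \<le> spectral_radius (outer y)" using sr(2) \<sigma>0 by force
    thus "spectral_radius (outer y) = \<sigma>" using spectrum_outer[OF y k] kr yy \<sigma>0 by auto
  qed
qed

lemma psd_entrywise_hc_outer:
  assumes u: "u \<in> carrier_vec N" and c: "\<forall>j<N. c j \<ge> 0"
  shows "psd N (entrywise (hc N c) (outer u))"
  unfolding outer_eq_gram_mat[OF u] entrywise_hc_gram_mat[OF finite.emptyI[THEN finite.insertI] c]
  by (rule psd_gram_mat)

text \<open>For rank one, \<open>h\<^sub>c[A]\<^sup>\<dagger>\<^sup>/\<^sup>2 A\<^sup>\<circ>\<^sup>M h\<^sub>c[A]\<^sup>\<dagger>\<^sup>/\<^sup>2 = y y\<^sup>*\<close> with \<open>y = h\<^sub>c[A]\<^sup>\<dagger>\<^sup>/\<^sup>2 u\<^sup>\<circ>\<^sup>M\<close>, whose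
  spectral radius is \<open>y\<^sup>* y = (u\<^sup>\<circ>\<^sup>M)\<^sup>* h\<^sub>c[A]\<^sup>\<dagger> u\<^sup>\<circ>\<^sup>M\<close>.\<close>

lemma crit_const_hc_power_outer:
  assumes N1: "N \<ge> 1" and cpos: "\<forall>j<N. c j > 0" and u: "u \<in> carrier_vec N"
  shows "complex_of_real (crit_const N (hc N c) (\<lambda>z. z ^ M) (outer u)) =
    conjugate (vpow u M) \<bullet> (mp_inverse (entrywise (hc N c) (outer u)) *\<^sub>v vpow u M)"
proof -
  define H where "H = entrywise (hc N c) (outer u)"
  define x where "x = vpow u M"
  have x: "x \<in> carrier_vec N" unfolding x_def vpow_def using u by simp
  have H: "psd N H" unfolding H_def using u cpos by (intro psd_entrywise_hc_outer) auto
  define S where "S = mp_half H"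
  note S = mp_half_psd[OF H, folded S_def]
  have Sx: "S *\<^sub>v x \<in> carrier_vec N" using S(1) x by simp
  have "crit_const N (hc N c) (\<lambda>z. z ^ M) (outer u) = spectral_radius (S * outer x * S)"
    unfolding crit_const_hc_power(1)[OF N1 cpos psd_outer[OF u]] entrywise_power_outer[OF u]
      S_def H_def x_def ..
  also have "\<dots> = spectral_radius (outer (S *\<^sub>v x))" unfolding congruence_outer[OF S(1,2) x] ..
  also have "\<dots> = (\<Sum>i<N. (cmod ((S *\<^sub>v x) $ i))^2)"
    by (rule spectral_radius_outer[OF Sx]) (use N1 in simp)
  finally have "complex_of_real (crit_const N (hc N c) (\<lambda>z. z ^ M) (outer u)) =
      conjugate (S *\<^sub>v x) \<bullet> (S *\<^sub>v x)"
    unfolding conjugate_scalar_prod_self[OF Sx] by simp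
  also have "\<dots> = conjugate x \<bullet> (S *\<^sub>v (S *\<^sub>v x))"
    using scalar_prod_mult_adj[OF S(1) x Sx] S(2) by simp
  also have "\<dots> = conjugate x \<bullet> (mp_inverse H *\<^sub>v x)"
    unfolding S(3)[symmetric] using assoc_mult_mat_vec[OF S(1) S(1) x] by simp
  finally show ?thesis unfolding H_def x_def .
qed

definition vandermonde_mat :: "nat \<Rightarrow> complex vec \<Rightarrow> complex mat" where
  "vandermonde_mat N u = mat N N (\<lambda>(i,k). u $ i ^ (N - 1 - k))"

lemma vandermonde_mat_carrier[simp]: "vandermonde_mat N u \<in> carrier_mat N N"
  by (simp add: vandermonde_mat_def)

lemma vandermonde_mat_dims[simp]: "dim_row (vandermonde_mat N u) = N" "dim_col (vandermonde_mat N u) = N"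
  by (simp_all add: vandermonde_mat_def)

lemma det_vandermonde_mat_nonzero:
  assumes u: "u \<in> carrier_vec N" and inj: "inj_on (\<lambda>i. u $ i) {..<N}"
  shows "det (vandermonde_mat N u) \<noteq> 0"
proof
  assume "det (vandermonde_mat N u) = 0"
  then obtain a where a: "a \<in> carrier_vec N" and a0: "a \<noteq> 0\<^sub>v N"
    and Wa: "vandermonde_mat N u *\<^sub>v a = 0\<^sub>v N"
    using det_0_iff_vec_prod_zero[OF vandermonde_mat_carrier] by blast
  define p where "p = (\<Sum>k<N. Polynomial.monom (a $ k) (N - 1 - k))"
  have root: "poly p (u $ i) = 0" if i: "i < N" for i
  proof -
    have "poly p (u $ i) = (\<Sum>k<N. vandermonde_mat N u $$ (i,k) * a $ k)"
      unfolding p_def using i by (simp add: poly_sum poly_monom vandermonde_mat_def ac_simps)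
    also have "\<dots> = 0" using index_mult_mat_vec_sum[OF vandermonde_mat_carrier[of N u] a i] Wa i by simp
    finally show ?thesis .
  qed
  have "degree p \<le> N - 1" unfolding p_def
    by (rule degree_sum_le) (auto intro: order.trans[OF degree_monom_le])
  moreover have "card ((\<lambda>i. u $ i) ` {..<N}) = N" using card_image[OF inj] by simp
  moreover have "N > 0" using a0 a by (cases N) (auto simp: vec_eq_iff)
  ultimately have "p = 0"
    by (intro poly_eqI_degree[of "(\<lambda>i. u $ i) ` {..<N}"]) (use root in auto)
  have "a $ k = 0" if k: "k < N" for k
  proof -
    have "coeff p (N - 1 - k) = (\<Sum>k'\<in>{k}. if N - 1 - k' = N - 1 - k then a $ k' else 0)"
      unfolding p_def coeff_sum coeff_monom by (rule sum.mono_neutral_right) (use k in auto)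
    thus ?thesis using \<open>p = 0\<close> by simp
  qed
  hence "a = 0\<^sub>v N" using a by (intro eq_vecI) auto
  thus False using a0 by simp
qed

lemma entrywise_hc_outer:
  assumes u: "u \<in> carrier_vec N"
  shows "entrywise (hc N c) (outer u) =
    vandermonde_mat N u * real_diag_mat N (\<lambda>k. c (N - 1 - k)) * adj (vandermonde_mat N u)"
proof (rule eq_matI)
  let ?W = "vandermonde_mat N u"
  fix i j assume "i < dim_row (?W * real_diag_mat N (\<lambda>k. c (N - 1 - k)) * adj ?W)"
    "j < dim_col (?W * real_diag_mat N (\<lambda>k. c (N - 1 - k)) * adj ?W)"
  hence i: "i < N" and j: "j < N" by auto
  have "(?W * real_diag_mat N (\<lambda>k. c (N - 1 - k)) * adj ?W) $$ (i,j) =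
      (\<Sum>k<N. u $ i ^ (N - Suc k) * complex_of_real (c (N - Suc k)) * cnj (u $ j ^ (N - Suc k)))"
    unfolding index_unitary_diag[OF vandermonde_mat_carrier i j]
    by (rule sum.cong) (use i j in \<open>auto simp: vandermonde_mat_def\<close>)
  also have "\<dots> = (\<Sum>p<N. u $ i ^ p * complex_of_real (c p) * cnj (u $ j ^ p))"
    by (rule sum.nat_diff_reindex)
  also have "\<dots> = entrywise (hc N c) (outer u) $$ (i,j)"
    using u i j by (auto simp: entrywise_def hc_def outer_def power_mult_distrib ac_simps intro!: sum.cong)
  finally show "entrywise (hc N c) (outer u) $$ (i,j) =
      (?W * real_diag_mat N (\<lambda>k. c (N - 1 - k)) * adj ?W) $$ (i,j)" ..
qed (use u in \<open>auto simp: entrywise_def outer_def\<close>)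

lemma mp_inverse_congruence_real_diag:
  assumes W: "W \<in> carrier_mat n n" and Wi: "Wi \<in> carrier_mat n n"
    and WWi: "W * Wi = 1\<^sub>m n" and WiW: "Wi * W = 1\<^sub>m n" and e: "\<forall>k<n. e k \<noteq> 0"
  shows "mp_inverse (W * real_diag_mat n e * adj W) = adj Wi * real_diag_mat n (\<lambda>k. inverse (e k)) * Wi"
proof -
  define D where "D = real_diag_mat n e"
  define Di where "Di = real_diag_mat n (\<lambda>k. inverse (e k))"
  have DDi: "D * Di = 1\<^sub>m n" "Di * D = 1\<^sub>m n"
    unfolding D_def Di_def real_diag_mat_mult using e by (auto intro!: eq_matI)
  have Dc: "D \<in> carrier_mat n n" and Dic: "Di \<in> carrier_mat n n" unfolding D_def Di_def by auto
  note cs = assoc_mult_mat[of _ n n _ n _ n] mult_carrier_mat[of _ n n _ n]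
  have aa1: "adj W * adj Wi = 1\<^sub>m n" using adj_mult[OF Wi W, symmetric] WiW by simp
  have aa2: "adj Wi * adj W = 1\<^sub>m n" using adj_mult[OF W Wi, symmetric] WWi by simp
  have "(W * D * adj W) * (adj Wi * Di * Wi) = W * ((D * ((adj W * adj Wi) * Di)) * Wi)"
    using W Dc Wi Dic by (simp add: cs)
  also have "\<dots> = 1\<^sub>m n" unfolding aa1 using Dc Dic W Wi WWi DDi by simp
  finally have 1: "(W * D * adj W) * (adj Wi * Di * Wi) = 1\<^sub>m n" .
  have "(adj Wi * Di * Wi) * (W * D * adj W) = adj Wi * ((Di * ((Wi * W) * D)) * adj W)"
    using W Dc Wi Dic by (simp add: cs)
  also have "\<dots> = 1\<^sub>m n" unfolding WiW using Dc Dic W Wi aa2 DDi by simp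
  finally have 2: "(adj Wi * Di * Wi) * (W * D * adj W) = 1\<^sub>m n" .
  have "mp_inverse (W * D * adj W) = adj Wi * Di * Wi"
    by (rule mp_inverse_eqI[of _ n]) (use W Wi Dc Dic 1 2 in \<open>simp_all add: cs\<close>)
  then show ?thesis unfolding D_def Di_def .
qed

lemma quad_form_congruence_real_diag:
  assumes Wi: "Wi \<in> carrier_mat n n" and x: "x \<in> carrier_vec n"
  shows "conjugate x \<bullet> ((adj Wi * real_diag_mat n e * Wi) *\<^sub>v x) =
    (\<Sum>k<n. complex_of_real (e k * (cmod ((Wi *\<^sub>v x) $ k))^2))"
proof -
  have a: "Wi *\<^sub>v x \<in> carrier_vec n" using Wi x by simp
  have "(adj Wi * real_diag_mat n e * Wi) *\<^sub>v x = adj Wi *\<^sub>v (real_diag_mat n e *\<^sub>v (Wi *\<^sub>v x))"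
    using Wi x by (simp add: assoc_mult_mat_vec[of _ n n _ n] mult_carrier_mat[of _ n n _ n])
  hence "conjugate x \<bullet> ((adj Wi * real_diag_mat n e * Wi) *\<^sub>v x) =
      conjugate (Wi *\<^sub>v x) \<bullet> (unitary_diag n (1\<^sub>m n) e *\<^sub>v (Wi *\<^sub>v x))"
    using scalar_prod_mult_adj[OF adj_carrier[OF Wi] x, of "real_diag_mat n e *\<^sub>v (Wi *\<^sub>v x)"] a
      mult_mat_vec_carrier[OF real_diag_mat_carrier a]
    by (simp add: unitary_diag_one)
  also have "\<dots> = (\<Sum>k<n. complex_of_real (e k * (cmod ((Wi *\<^sub>v x) $ k))^2))"
    using quad_form_unitary_diag[OF unitary_one a, of e] a by simp
  finally show ?thesis .
qed

lemma det_permute_cols: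
  assumes A: "A \<in> carrier_mat n n" and p: "p permutes {0..<n}"
  shows "det (mat n n (\<lambda>(i,j). A $$ (i, p j))) = signof p * det A"
proof -
  have "mat n n (\<lambda>(i,j). A $$ (i, p j)) = transpose_mat (mat n n (\<lambda>(i,j). transpose_mat A $$ (p i, j)))"
    using A p by (intro eq_matI) (auto simp: permutes_in_image)
  hence "det (mat n n (\<lambda>(i,j). A $$ (i, p j))) = det (mat n n (\<lambda>(i,j). transpose_mat A $$ (p i, j)))"
    using det_transpose[of "mat n n (\<lambda>(i,j). transpose_mat A $$ (p i, j))" n] by simp
  also have "\<dots> = signof p * det (transpose_mat A)" by (rule det_permute_rows[OF _ p]) (use A in simp)
  also have "\<dots> = signof p * det A" using det_transpose[OF A] by simp
  finally show ?thesis .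
qed

lemma move_to_front_permutes:
  fixes m N :: nat assumes m: "m < N"
  shows "(\<lambda>k. if k = 0 then m else if k \<le> m then k - 1 else k) permutes {0..<N}"
proof (rule bij_imp_permutes)
  let ?s = "\<lambda>k::nat. if k = 0 then m else if k \<le> m then k - 1 else k"
  let ?t = "\<lambda>k::nat. if k = m then 0 else if k < m then k + 1 else k"
  show "bij_betw ?s {0..<N} {0..<N}"
    by (rule bij_betw_byWitness[where f' = ?t]) (use m in auto)
qed (use m in auto)

text \<open>The exponents \<open>\<mu>\<^sub>k + N - 1 - k\<close> of the hook \<open>\<mu>(M,N,j)\<close> are \<open>M, N - 1, \<dots>, j + 1, j - 1, \<dots>, 0\<close>:
  the bialternant numerator is the Vandermonde matrix with its column of exponent \<open>j\<close> (column
  \<open>N - 1 - j\<close>) replaced by \<open>u\<^sup>\<circ>\<^sup>M\<close> and moved to the front.\<close>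

lemma cmod_schur_eval_hook:
  assumes u: "u \<in> carrier_vec N" and MN: "M \<ge> N" and j: "j < N"
  shows "cmod (schur_eval N (hook M N j) (\<lambda>i. u $ i)) =
    cmod (det (replace_col (vandermonde_mat N u) (vpow u M) (N - 1 - j)) / det (vandermonde_mat N u))"
proof -
  define m where "m = N - 1 - j"
  have m: "m < N" unfolding m_def using j by simp
  define \<sigma> where "\<sigma> k = (if k = 0 then m else if k \<le> m then k - 1 else k)" for k
  have \<sigma>: "\<sigma> permutes {0..<N}" unfolding \<sigma>_def by (rule move_to_front_permutes[OF m])
  define R where "R = replace_col (vandermonde_mat N u) (vpow u M) m"
  have Rc: "R \<in> carrier_mat N N" unfolding R_def replace_col_def by auto
  have "mat N N (\<lambda>(i,k). u $ i ^ (hook M N j k + (N - 1 - k))) = mat N N (\<lambda>(i,k). R $$ (i, \<sigma> k))"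
  proof (rule cong_mat[OF refl refl])
    fix i k assume i: "i < N" and k: "k < N"
    have "\<sigma> k < N" using k m unfolding \<sigma>_def by auto
    then show "(case (i, k) of (i, k) \<Rightarrow> u $ i ^ (hook M N j k + (N - 1 - k))) =
        (case (i, k) of (i, k) \<Rightarrow> R $$ (i, \<sigma> k))"
      using i k MN j u unfolding R_def replace_col_def vandermonde_mat_def \<sigma>_def hook_def m_def vpow_def
      by (auto simp: Suc_diff_le)
  qed
  hence "schur_eval N (hook M N j) (\<lambda>i. u $ i) = signof \<sigma> * det R / det (vandermonde_mat N u)"
    unfolding schur_eval_def det_permute_cols[OF Rc \<sigma>, symmetric]
    by (simp add: vandermonde_mat_def)
  then show ?thesis unfolding R_def m_def by (simp add: sign_def norm_mult norm_divide)
qed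

lemma quad_form_mp_inverse_hc_outer:
  assumes MN: "M \<ge> N" and cpos: "\<forall>j<N. c j > 0" and u: "u \<in> carrier_vec N"
    and inj: "inj_on (\<lambda>i. u $ i) {..<N}"
  shows "conjugate (vpow u M) \<bullet> (mp_inverse (entrywise (hc N c) (outer u)) *\<^sub>v vpow u M) =
    complex_of_real (\<Sum>j<N. (cmod (schur_eval N (hook M N j) (\<lambda>i. u $ i)))\<^sup>2 / c j)"
proof -
  define W where "W = vandermonde_mat N u"
  have W: "W \<in> carrier_mat N N" unfolding W_def by simp
  have dW: "det W \<noteq> 0" unfolding W_def by (rule det_vandermonde_mat_nonzero[OF u inj])
  define Wi where "Wi = (1 / det W) \<cdot>\<^sub>m adj_mat W"
  have Wi: "Wi \<in> carrier_mat N N" unfolding Wi_def using adj_mat(1)[OF W] by simp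
  have "(1 / det W) \<cdot>\<^sub>m (det W \<cdot>\<^sub>m 1\<^sub>m N) = 1\<^sub>m N" using dW by (intro eq_matI) auto
  hence WWi: "W * Wi = 1\<^sub>m N" and WiW: "Wi * W = 1\<^sub>m N"
    unfolding Wi_def using adj_mat[OF W]
    by (simp_all add: mult_smult_distrib[OF W adj_mat(1)[OF W]] mult_smult_assoc_mat[OF adj_mat(1)[OF W] W])
  define x where "x = vpow u M"
  have x: "x \<in> carrier_vec N" unfolding x_def vpow_def using u by simp
  define a where "a = Wi *\<^sub>v x"
  have a: "a \<in> carrier_vec N" unfolding a_def using Wi x by simp
  have Wa: "W *\<^sub>v a = x" unfolding a_def using assoc_mult_mat_vec[OF W Wi x] WWi x by simp
  have "mp_inverse (entrywise (hc N c) (outer u)) =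
      adj Wi * real_diag_mat N (\<lambda>k. inverse (c (N - 1 - k))) * Wi"
    unfolding entrywise_hc_outer[OF u] W_def[symmetric]
    by (rule mp_inverse_congruence_real_diag[OF W Wi WWi WiW])
      (use cpos in \<open>auto simp: less_imp_neq[symmetric]\<close>)
  hence "conjugate x \<bullet> (mp_inverse (entrywise (hc N c) (outer u)) *\<^sub>v x) =
      complex_of_real (\<Sum>k<N. (cmod (a $ k))^2 / c (N - 1 - k))"
    using quad_form_congruence_real_diag[OF Wi x] unfolding a_def by (simp add: field_simps)
  also have "(\<Sum>k<N. (cmod (a $ k))^2 / c (N - 1 - k)) =
      (\<Sum>j<N. (cmod (a $ (N - Suc j)))^2 / c j)"
    by (subst sum.nat_diff_reindex[symmetric]) (auto intro!: sum.cong simp: Suc_diff_Suc)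
  also have "\<dots> = (\<Sum>j<N. (cmod (schur_eval N (hook M N j) (\<lambda>i. u $ i)))\<^sup>2 / c j)"
  proof (rule sum.cong[OF refl])
    fix j assume j: "j \<in> {..<N}"
    have "a $ (N - 1 - j) = det (replace_col W x (N - 1 - j)) / det W"
      using cramer_lemma_mat[OF W a, of "N - 1 - j"] Wa dW j by (auto simp: field_simps)
    then show "(cmod (a $ (N - Suc j)))^2 / c j = (cmod (schur_eval N (hook M N j) (\<lambda>i. u $ i)))\<^sup>2 / c j"
      using cmod_schur_eval_hook[OF u MN, of j] j unfolding W_def x_def by simp
  qed
  finally show ?thesis unfolding x_def .
qed

theorem proposition3p4:
  fixes M N :: nat and c :: "nat \<Rightarrow> real"
  assumes MN: "M \<ge> N" and N1: "N \<ge> 1"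
    and cpos: "\<forall>j<N. c j > 0"
  shows "(\<forall>A. psd N A \<and> A \<noteq> 0\<^sub>m N N \<longrightarrow>
            crit_const N (hc N c) (\<lambda>z. z ^ M) A \<in> crit_set N (hc N c) (\<lambda>z. z ^ M) A \<and>
            (\<forall>C \<in> crit_set N (hc N c) (\<lambda>z. z ^ M) A. crit_const N (hc N c) (\<lambda>z. z ^ M) A \<le> C) \<and>
            crit_const N (hc N c) (\<lambda>z. z ^ M) A =
              spectral_radius (mp_half (entrywise (hc N c) A) * entrywise (\<lambda>z. z ^ M) A
                               * mp_half (entrywise (hc N c) A)))
       \<and> (\<forall>u. u \<in> carrier_vec N \<and> inj_on (\<lambda>i. u $ i) {..<N} \<longrightarrow>
            complex_of_real (crit_const N (hc N c) (\<lambda>z. z ^ M) (outer u)) =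
              conjugate (vpow u M) \<bullet> (mp_inverse (entrywise (hc N c) (outer u)) *\<^sub>v vpow u M)
          \<and> conjugate (vpow u M) \<bullet> (mp_inverse (entrywise (hc N c) (outer u)) *\<^sub>v vpow u M) =
              complex_of_real (\<Sum>j<N. (cmod (schur_eval N (hook M N j) (\<lambda>i. u $ i)))\<^sup>2 / c j))"
  using crit_const_hc_power[OF N1 cpos] crit_const_hc_power_outer[OF N1 cpos]
    quad_form_mp_inverse_hc_outer[OF MN cpos] by blast

end
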